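(* The double quotient $P_{(2,2)}(F)\setminus \mathbf{GSp}_6(F)/\iota\left(\mathbf{GL}_2\times_{\det,\nu}\mathbf{GSp}_4\right)(F)$ consists of four elements represented by $I_6, \tau_1, \tau_2$, and $\tau_{\rm op}$, with corresponding flag and stabilizer as follows: \begin{enumerate} \item $P_{(2,2)}(F)\cdot I_6$ corresponds to the flag $0 \subset \langle f_1,f_2 \rangle$ and has stabilizer $\iota(P_{(1,0)}\times_{\det,\nu} P_{(1,2)})(F)$. \item $P_{(2,2)}(F)\cdot \tau_1$ corresponds to the flag $0 \subset \langle f_2,f_3 \rangle$ and has stabilizer $\iota\left(\mathbf{GL}_2\times_{\det,\nu} P_{(2,0)}\right)(F)$. \item $P_{(2,2)}(F)\cdot \tau_2$ corresponds to the flag $0 \subset \langle f_1+f_3,f_2 \rangle$ and has stabilizer \[\left \{ \left(\begin{smallmatrix}a & b \\ & d\end{smallmatrix}\right) \times \left(\begin{smallmatrix} \alpha & &&\\&a&&\\&&d & \\&&&\delta \end{smallmatrix}\right)\,:\, ad = \alpha \delta \right \} \cdot \left(\{ I_2\} \times U_{\mathbf{GSp}_4}(F)\right).\] \item $P_{(2,2)}(F) \cdot \tau_{\rm op}$ corresponds to $0 \subset \langle e_2+f_1, e_1+f_2 \rangle$ and has stabilizer $\mathbf{J}(F)$. \end{enumerate}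
   Context: $F$ is a number field. $\mathbf{GSp}_{2n}$ is the group of $(g,m_g)$ with ${}^tg J_{2n} g = m_g J_{2n}$, $J_{2n}=\left(\begin{smallmatrix} & I_n' \\ -I_n' & \end{smallmatrix}\right)$ with $I_n'$ the antidiagonal matrix of ones; $\nu(g)=m_g$ is the similitude character ($\mathbf{GSp}_2=\mathbf{GL}_2$, $\nu=\det$). $W_{2n}$ is the standard representation of $\mathbf{GSp}_{2n}$ with basis $\{e_1,\dots,e_n,f_n,\dots,f_1\}$; for $0\le m\le n$, $P_{(m,2(n-m))}$ is the maximal parabolic of $\mathbf{GSp}_{2n}$ stabilizing the isotropic subspace $\langle e_1,\dots,e_m\rangle$ (Levi $\mathbf{GL}_m\times\mathbf{GSp}_{2(n-m)}$); in particular $P_{(1,0)}$ is the upper triangular Borel of $\mathbf{GL}_2$, $P_{(1,2)}$ is the Klingen parabolic and $P_{(2,0)}$ the Siegel parabolic of $\mathbf{GSp}_4$. $P_{(2,2)}$ is the parabolic of $\mathbf{GSp}_6$ with Levi $\mathbf{GL}_2\times\mathbf{GL}_2$; the flag variety $P_{(2,2)}\backslash\mathbf{GSp}_6$ parametrizes isotropic planes in $W_6$, $P_{(2,2)}$ being the stabilizer of $\langle f_2,f_1\rangle$. $U_{\mathbf{GSp}_4}$ is the unipotent radical of the upper triangular Borel of $\mathbf{GSp}_4$. The fiber product $\mathbf{GL}_2\times_{\det,\nu}\mathbf{GSp}_4=\{(h_1,h_2): \det(h_1)=\nu(h_2)\}$ embeds into $\mathbf{GSp}_6$ via the decomposition $W_6=\langle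 e_1,f_1\rangle\oplus\langle e_2,e_3,f_3,f_2\rangle$: $\iota\left(\left(\begin{smallmatrix}a&b\\c&d\end{smallmatrix}\right), g\right)=\left(\begin{smallmatrix} a& &b\\ &g& \\c& &d \end{smallmatrix}\right)$. $\mathbf{J}=\{(h_1,h_2)\in\mathbf{GL}_2\times\mathbf{GL}_2:\det h_1=\det h_2\}$, embedded in $\mathbf{GL}_2\times_{\det,\nu}\mathbf{GSp}_4$ by $(h_1,h_2)\mapsto (h_1, j(h_1,h_2))$ with $j(h_1,h_2)=\left(\begin{smallmatrix} d& &c\\ &h_2& \\ b& &a \end{smallmatrix}\right)$ for $h_1=\left(\begin{smallmatrix}a&b\\c&d\end{smallmatrix}\right)$. Finally $\tau_{1} = \left(\begin{smallmatrix}0&0&1&&&\\0&1&0&&&\\1&0&0&&&\\ &&&0&0&1\\&&&0&1&0\\&&&1&0&0 \end{smallmatrix}\right)$, $\tau_{2} = \left(\begin{smallmatrix}1&0&0&&&\\0&1&0&&&\\-1&0&1&&&\\ &&&1&0&0\\&&&0&1&0\\&&&1&0&1 \end{smallmatrix}\right)$, $\tau_{\rm op} = \left(\begin{smallmatrix}1&0&&&&\\0&1&&&&\\&&1&0&&\\ &&0&1&&\\1&0&&&1&0\\0&1&&&0&1 \end{smallmatrix}\right)$. *)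

theory Defs
  imports "Jordan_Normal_Form.Matrix" "Jordan_Normal_Form.Determinant"
begin

definition number_field :: "'a::field_char_0 itself \<Rightarrow> bool" where
  "number_field _ \<longleftrightarrow>
     (\<exists>B::'a set. finite B \<and> (\<forall>x::'a. \<exists>c::'a \<Rightarrow> rat. x = (\<Sum>b\<in>B. of_rat (c b) * b)))"

definition Jmat :: "nat \<Rightarrow> 'a::comm_ring_1 mat" where
  "Jmat n = mat (2*n) (2*n) (\<lambda>(i,j). if j = 2*n - 1 - i then (if i < n then 1 else - 1) else 0)"

definition GSp :: "nat \<Rightarrow> 'a::field mat set" where
  "GSp n = {g \<in> carrier_mat (2*n) (2*n).
              \<exists>m. m \<noteq> 0 \<and> transpose_mat g * Jmat n * g = m \<cdot>\<^sub>m Jmat n}"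

definition sim :: "nat \<Rightarrow> 'a::field mat \<Rightarrow> 'a" where
  "sim n g = (THE m. transpose_mat g * Jmat n * g = m \<cdot>\<^sub>m Jmat n)"

definition GL2 :: "'a::field mat set" where
  "GL2 = {g \<in> carrier_mat 2 2. det g \<noteq> 0}"

(* maximal parabolic P_{(m,2(n-m))} of GSp_{2n}: stabilizer of <e_1,...,e_m> (column vectors) *)
definition parabolic :: "nat \<Rightarrow> nat \<Rightarrow> 'a::field mat set" where
  "parabolic n m = {g \<in> GSp n. \<forall>v \<in> carrier_vec (2*n).
       (\<forall>i. m \<le> i \<and> i < 2*n \<longrightarrow> v $ i = 0) \<longrightarrow>
       (\<forall>i. m \<le> i \<and> i < 2*n \<longrightarrow> (g *\<^sub>v v) $ i = 0)}"

definition fiber_prod :: "'a::field mat set \<Rightarrow> 'a mat set \<Rightarrow> ('a mat \<times> 'a mat) set" where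
  "fiber_prod A B = {(h1, h2). h1 \<in> A \<and> h2 \<in> B \<and> det h1 = sim 2 h2}"

(* iota : GL_2 x GSp_4 -> GSp_6, W_6 = <e1,f1> + <e2,e3,f3,f2>; basis order e1,e2,e3,f3,f2,f1 *)
definition iota :: "'a::field mat \<Rightarrow> 'a mat \<Rightarrow> 'a mat" where
  "iota h g = mat 6 6 (\<lambda>(i,j).
     if (i = 0 \<or> i = 5) \<and> (j = 0 \<or> j = 5) then h $$ (i div 5, j div 5)
     else if 1 \<le> i \<and> i \<le> 4 \<and> 1 \<le> j \<and> j \<le> 4 then g $$ (i - 1, j - 1)
     else 0)"

definition Hgrp :: "'a::field mat set" where
  "Hgrp = (\<lambda>(h1, h2). iota h1 h2) ` fiber_prod GL2 (GSp 2)"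

definition P22 :: "'a::field mat set" where
  "P22 = parabolic 3 2"

definition right_coset :: "'a::field mat \<Rightarrow> 'a mat set" where
  "right_coset g = {p * g | p. p \<in> P22}"

definition double_coset :: "'a::field mat \<Rightarrow> 'a mat set" where
  "double_coset g = {p * g * h | p h. p \<in> P22 \<and> h \<in> Hgrp}"

definition double_quotient :: "'a::field mat set set" where
  "double_quotient = double_coset ` GSp 3"

definition stab :: "'a::field mat \<Rightarrow> 'a mat set" where
  "stab g = {h \<in> Hgrp. right_coset (g * h) = right_coset g}"

(* row-vector (right) action on W_6 *)
definition row_act :: "'a::field vec \<Rightarrow> 'a mat \<Rightarrow> 'a vec" where
  "row_act w g = transpose_mat g *\<^sub>v w"

definition span2 :: "'a::field vec \<Rightarrow> 'a vec \<Rightarrow> 'a vec set" where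
  "span2 u w = {c \<cdot>\<^sub>v u + d \<cdot>\<^sub>v w | c d. True}"

definition e :: "nat \<Rightarrow> 'a::field vec" where "e k = unit_vec 6 (k - 1)"
definition f :: "nat \<Rightarrow> 'a::field vec" where "f k = unit_vec 6 (6 - k)"

definition plane_of :: "'a::field mat \<Rightarrow> 'a vec set" where
  "plane_of g = (\<lambda>w. row_act w g) ` span2 (f 1) (f 2)"

definition tau1 :: "'a::field mat" where
  "tau1 = mat_of_rows_list 6
     [[0,0,1,0,0,0],[0,1,0,0,0,0],[1,0,0,0,0,0],
      [0,0,0,0,0,1],[0,0,0,0,1,0],[0,0,0,1,0,0]]"

definition tau2 :: "'a::field mat" where
  "tau2 = mat_of_rows_list 6
     [[1,0,0,0,0,0],[0,1,0,0,0,0],[-1,0,1,0,0,0],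
      [0,0,0,1,0,0],[0,0,0,0,1,0],[0,0,0,1,0,1]]"

definition tau_op :: "'a::field mat" where
  "tau_op = mat_of_rows_list 6
     [[1,0,0,0,0,0],[0,1,0,0,0,0],[0,0,1,0,0,0],
      [0,0,0,1,0,0],[1,0,0,0,1,0],[0,1,0,0,0,1]]"

definition U_GSp4 :: "'a::field mat set" where
  "U_GSp4 = {u \<in> GSp 2. \<forall>i<4. \<forall>j<4. (j < i \<longrightarrow> u $$ (i,j) = 0) \<and> (i = j \<longrightarrow> u $$ (i,j) = 1)}"

definition mat2 :: "'a::field \<Rightarrow> 'a \<Rightarrow> 'a \<Rightarrow> 'a \<Rightarrow> 'a mat" where
  "mat2 a b c d = mat_of_rows_list 2 [[a,b],[c,d]]"

definition diag4 :: "'a::field \<Rightarrow> 'a \<Rightarrow> 'a \<Rightarrow> 'a \<Rightarrow> 'a mat" where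
  "diag4 a b c d = mat_of_rows_list 4 [[a,0,0,0],[0,b,0,0],[0,0,c,0],[0,0,0,d]]"

definition stab3_set :: "('a::field mat \<times> 'a mat) set" where
  "stab3_set = {(mat2 a b 0 d * 1\<^sub>m 2, diag4 \<alpha> a d \<delta> * u) | a b d \<alpha> \<delta> u.
      a \<noteq> 0 \<and> d \<noteq> 0 \<and> \<alpha> \<noteq> 0 \<and> \<delta> \<noteq> 0 \<and> a * d = \<alpha> * \<delta> \<and> u \<in> U_GSp4}"

definition jmap :: "'a::field mat \<Rightarrow> 'a mat \<Rightarrow> 'a mat" where
  "jmap h1 h2 = mat 4 4 (\<lambda>(i,j).
     if i = 0 \<and> j = 0 then h1 $$ (1,1) else if i = 0 \<and> j = 3 then h1 $$ (1,0)
     else if i = 3 \<and> j = 0 then h1 $$ (0,1) else if i = 3 \<and> j = 3 then h1 $$ (0,0)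
     else if (i = 1 \<or> i = 2) \<and> (j = 1 \<or> j = 2) then h2 $$ (i - 1, j - 1)
     else 0)"

definition Jgrp :: "('a::field mat \<times> 'a mat) set" where
  "Jgrp = {(h1, h2). h1 \<in> GL2 \<and> h2 \<in> GL2 \<and> det h1 = det h2}"

end

(* A coset P22 g is determined by the isotropic plane W = <f2,f1> g spanned by the last two
   rows of g. Split W6 into the orthogonal sum of O = <e1,f1> (the GL2 factor) and
   M = <e2,e3,f3,f2> (the GSp4 factor). If the projection of W to O is bijective, W lies in the
   orbit of tau_op; if it is zero, W lies in M and in the orbit of tau1; otherwise W meets M in a
   line, and W is in the orbit of I or of tau2 according as it meets O or not. In each case the
   two rows are completed to a symplectic basis adapted to O + M, that is, to an element h of
   iota(GL2 x GSp4) with <f2,f1> g = <f2,f1> tau h. The properties "W lies in M", "W meets M"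
   and "W meets O" are invariant under both actions and separate the four orbits. The
   stabilizer of P22 tau is the set of h with tau h tau^-1 in P22, which is read off entrywise. *)

theory Submission
  imports Defs
begin

section \<open>Symplectic similitudes\<close>

declare index_mult_mat(1) [simp del]

lemma mult_mat_entry:
  "A \<in> carrier_mat n k \<Longrightarrow> B \<in> carrier_mat k m \<Longrightarrow> i < n \<Longrightarrow> j < m \<Longrightarrow>
   (A * B) $$ (i,j) = (\<Sum>l<k. A $$ (i,l) * B $$ (l,j))"
  by (auto simp: index_mult_mat scalar_prod_def lessThan_atLeast0 intro!: sum.cong)

lemma smult_smult_mat [simp]: "(a::'a::comm_ring_1) \<cdot>\<^sub>m (b \<cdot>\<^sub>m A) = (a * b) \<cdot>\<^sub>m A"
  by (rule eq_matI) (auto simp: mult.assoc)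

lemma one_smult_mat [simp]: "(1::'a::comm_ring_1) \<cdot>\<^sub>m A = A"
  by (rule eq_matI) auto

lemma Jmat_carrier [simp]: "Jmat n \<in> carrier_mat (2*n) (2*n)"
  by (simp add: Jmat_def)

lemma Jmat_dims [simp]: "dim_row (Jmat n) = 2*n" "dim_col (Jmat n) = 2*n"
  by (simp_all add: Jmat_def)

lemma Jmat_entry:
  "i < 2*n \<Longrightarrow> j < 2*n \<Longrightarrow>
   Jmat n $$ (i,j) = (if j = 2*n - 1 - i then (if i < n then 1 else -1) else 0)"
  by (simp add: Jmat_def)

lemma Jmat_skew: "i < 2*n \<Longrightarrow> j < 2*n \<Longrightarrow> Jmat n $$ (j,i) = - (Jmat n $$ (i,j) :: 'a::comm_ring_1)"
  by (auto simp: Jmat_entry)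

lemma Jmat_mult_Jmat: "(Jmat n :: 'a::comm_ring_1 mat) * Jmat n = (-1) \<cdot>\<^sub>m 1\<^sub>m (2*n)"
proof (rule eq_matI)
  fix i j assume "i < dim_row ((-1::'a) \<cdot>\<^sub>m 1\<^sub>m (2*n))" "j < dim_col ((-1::'a) \<cdot>\<^sub>m 1\<^sub>m (2*n))"
  hence ij: "i < 2*n" "j < 2*n" by auto
  have "(Jmat n * Jmat n) $$ (i,j) = (\<Sum>l<2*n. Jmat n $$ (i,l) * (Jmat n :: 'a mat) $$ (l,j))"
    using ij by (simp add: mult_mat_entry[OF Jmat_carrier Jmat_carrier])
  also have "\<dots> = (\<Sum>l<2*n. if l = 2*n - 1 - i then
      (if i < n then 1 else -1) * (if j = 2*n - 1 - l then (if l < n then 1 else -1) else 0) else 0)"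
    using ij by (intro sum.cong) (auto simp: Jmat_entry)
  also have "\<dots> = (if i < n then 1 else -1) * (if j = i then (if 2*n - 1 - i < n then 1 else -1) else 0)"
    using ij by (simp add: sum.delta)
  also have "\<dots> = ((-1::'a) \<cdot>\<^sub>m 1\<^sub>m (2*n)) $$ (i,j)"
    using ij by auto
  finally show "(Jmat n * Jmat n) $$ (i,j) = ((-1::'a) \<cdot>\<^sub>m 1\<^sub>m (2*n)) $$ (i,j)" .
qed auto

(* The form x\<^sup>T J y, for vectors given by their coordinate functions on {0..<2n}. *)
definition sform :: "nat \<Rightarrow> (nat \<Rightarrow> 'a::comm_ring_1) \<Rightarrow> (nat \<Rightarrow> 'a) \<Rightarrow> 'a" where
  "sform n x y = (\<Sum>k<n. x k * y (2*n - 1 - k) - x (2*n - 1 - k) * y k)"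

lemma sform_cong:
  assumes "\<And>k. k < 2*n \<Longrightarrow> x k = x' k" "\<And>k. k < 2*n \<Longrightarrow> y k = y' k"
  shows "sform n x y = sform n x' y'"
  using assms unfolding sform_def by (intro sum.cong) auto

lemma sform_expand:
  "sform 1 x y = x 0 * y 1 - x 1 * y 0"
  "sform 2 x y = x 0 * y 3 + x 1 * y 2 - x 2 * y 1 - x 3 * y 0"
  "sform 3 x y = x 0 * y 5 + x 1 * y 4 + x 2 * y 3 - x 3 * y 2 - x 4 * y 1 - x 5 * y 0"
  by (simp_all add: sform_def numeral_eq_Suc algebra_simps)

lemma gram_entry:
  fixes g :: "'a::comm_ring_1 mat"
  assumes g: "g \<in> carrier_mat (2*n) (2*n)" and ij: "i < 2*n" "j < 2*n"
  shows "(transpose_mat g * Jmat n * g) $$ (i,j) = sform n (\<lambda>k. g $$ (k,i)) (\<lambda>k. g $$ (k,j))"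
proof -
  define s :: "nat \<Rightarrow> 'a" where "s l = (if l < n then 1 else -1)" for l
  have gT: "transpose_mat g \<in> carrier_mat (2*n) (2*n)" using g by simp
  have "(transpose_mat g * Jmat n) $$ (i,l) = s (2*n - 1 - l) * g $$ (2*n - 1 - l, i)" if l: "l < 2*n" for l
  proof -
    have "(transpose_mat g * Jmat n) $$ (i,l) = (\<Sum>k<2*n. g $$ (k,i) * Jmat n $$ (k,l))"
      using g ij l by (simp add: mult_mat_entry[OF _ Jmat_carrier])
    also have "\<dots> = (\<Sum>k<2*n. if k = 2*n - 1 - l then s k * g $$ (k,i) else 0)"
      using l by (intro sum.cong) (auto simp: Jmat_entry s_def)
    also have "\<dots> = s (2*n - 1 - l) * g $$ (2*n - 1 - l, i)"
      using l by (simp add: sum.delta)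
    finally show ?thesis .
  qed
  hence "(transpose_mat g * Jmat n * g) $$ (i,j)
      = (\<Sum>l<2*n. s (2*n - 1 - l) * g $$ (2*n - 1 - l, i) * g $$ (l,j))"
    using ij by (simp add: mult_mat_entry[OF mult_carrier_mat[OF gT Jmat_carrier] g])
  also have "\<dots> = (\<Sum>l<n. s (2*n - 1 - l) * g $$ (2*n - 1 - l, i) * g $$ (l,j))
      + (\<Sum>l\<in>{n..<2*n}. s (2*n - 1 - l) * g $$ (2*n - 1 - l, i) * g $$ (l,j))"
    by (simp add: lessThan_atLeast0 sum.atLeastLessThan_concat)
  also have "(\<Sum>l\<in>{n..<2*n}. s (2*n - 1 - l) * g $$ (2*n - 1 - l, i) * g $$ (l,j))
      = (\<Sum>k<n. s k * g $$ (k, i) * g $$ (2*n - 1 - k, j))"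
    by (rule sum.reindex_bij_witness[of _ "\<lambda>k. 2*n - 1 - k" "\<lambda>l. 2*n - 1 - l"]) auto
  also have "(\<Sum>l<n. s (2*n - 1 - l) * g $$ (2*n - 1 - l, i) * g $$ (l,j))
      + (\<Sum>k<n. s k * g $$ (k, i) * g $$ (2*n - 1 - k, j))
      = sform n (\<lambda>k. g $$ (k,i)) (\<lambda>k. g $$ (k,j))"
    unfolding sform_def sum.distrib[symmetric] by (intro sum.cong) (auto simp: s_def)
  finally show ?thesis .
qed

lemma sform_skew: "sform n x y = - sform n y x"
  unfolding sform_def sum_negf[symmetric] by (intro sum.cong) (simp_all add: algebra_simps)

lemma sform_self: "sform n x x = 0"
  by (simp add: sform_def mult.commute)

definition lin_comb :: "'a \<Rightarrow> (nat \<Rightarrow> 'a::comm_ring_1) \<Rightarrow> 'a \<Rightarrow> (nat \<Rightarrow> 'a) \<Rightarrow> nat \<Rightarrow> 'a" where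
  "lin_comb a x b y = (\<lambda>k. a * x k + b * y k)"

lemma sform_lin_comb_left: "sform n (lin_comb a x b y) z = a * sform n x z + b * sform n y z"
  unfolding sform_def lin_comb_def sum_distrib_left sum.distrib[symmetric]
  by (intro sum.cong) (simp_all add: algebra_simps)

lemma sform_lin_comb_right: "sform n z (lin_comb a x b y) = a * sform n z x + b * sform n z y"
  using sform_lin_comb_left[of n a x b y z] sform_skew[of n z "lin_comb a x b y"]
    sform_skew[of n x z] sform_skew[of n y z] by simp

lemma sform_scale_left: "sform n (\<lambda>k. a * x k) y = a * sform n x y"
  unfolding sform_def sum_distrib_left by (intro sum.cong) (simp_all add: algebra_simps)

lemma sform_scale_right: "sform n x (\<lambda>k. a * y k) = a * sform n x y"
  unfolding sform_def sum_distrib_left by (intro sum.cong) (simp_all add: algebra_simps)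

lemma sim_eq:
  assumes n: "n > 0" and rel: "transpose_mat g * Jmat n * g = m \<cdot>\<^sub>m Jmat n"
  shows "sim n g = (m :: 'a::field)"
  unfolding sim_def
proof (rule the_equality)
  fix m' assume "transpose_mat g * Jmat n * g = m' \<cdot>\<^sub>m Jmat n"
  hence "(m' \<cdot>\<^sub>m Jmat n) $$ (0, 2*n - 1) = ((m \<cdot>\<^sub>m Jmat n) :: 'a mat) $$ (0, 2*n - 1)"
    using rel by simp
  thus "m' = m" using n by (simp add: Jmat_entry)
qed (fact rel)

lemma GSp_carrier: "g \<in> GSp n \<Longrightarrow> g \<in> carrier_mat (2*n) (2*n)"
  by (simp add: GSp_def)

lemma GSp_sim:
  assumes "g \<in> GSp n" "n > 0"
  shows "sim n g \<noteq> 0" "transpose_mat g * Jmat n * g = sim n g \<cdot>\<^sub>m Jmat n"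
  using assms sim_eq by (auto simp: GSp_def)

lemma GSp_by_gram:
  assumes g: "g \<in> carrier_mat (2*n) (2*n)" and m: "m \<noteq> 0"
    and gram: "\<And>i j. i < 2*n \<Longrightarrow> j < 2*n \<Longrightarrow>
                 sform n (\<lambda>k. g $$ (k,i)) (\<lambda>k. g $$ (k,j)) = m * Jmat n $$ (i,j)"
  shows "g \<in> GSp n" "n > 0 \<Longrightarrow> sim n g = m"
proof -
  have rel: "transpose_mat g * Jmat n * g = m \<cdot>\<^sub>m Jmat n"
    using g by (intro eq_matI) (auto simp: gram_entry gram)
  thus "g \<in> GSp n" using g m by (auto simp: GSp_def)
  show "n > 0 \<Longrightarrow> sim n g = m" using sim_eq rel by blast
qed

lemma gram_GSp:
  assumes g: "g \<in> GSp n" and n: "n > 0" and ij: "i < 2*n" "j < 2*n"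
  shows "sform n (\<lambda>k. g $$ (k,i)) (\<lambda>k. g $$ (k,j)) = sim n g * Jmat n $$ (i,j)"
proof -
  have "(transpose_mat g * Jmat n * g) $$ (i,j) = (sim n g \<cdot>\<^sub>m Jmat n) $$ (i,j)"
    using GSp_sim(2)[OF g n] by simp
  thus ?thesis using ij gram_entry[OF GSp_carrier[OF g] ij] by simp
qed

lemma one_GSp: "(1\<^sub>m (2*n) :: 'a::field mat) \<in> GSp n"
  by (auto simp: GSp_def intro!: exI[of _ 1])

lemma GSp_mult:
  assumes g: "g \<in> GSp n" and h: "h \<in> GSp n"
  shows "g * h \<in> GSp n"
proof -
  (* Fixing the dimensions lets simp discharge the carrier premises. *)
  note sq = assoc_mult_mat[of _ "2*n" "2*n" _ "2*n" _ "2*n"] mult_carrier_mat[of _ "2*n" "2*n" _ "2*n"]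
    mult_smult_distrib[of _ "2*n" "2*n" _ "2*n"]
  obtain a b where gc: "g \<in> carrier_mat (2*n) (2*n)" and a: "a \<noteq> 0"
      and ga: "transpose_mat g * Jmat n * g = a \<cdot>\<^sub>m Jmat n"
    and hc: "h \<in> carrier_mat (2*n) (2*n)" and b: "b \<noteq> 0"
      and hb: "transpose_mat h * Jmat n * h = b \<cdot>\<^sub>m Jmat n"
    using g h by (auto simp: GSp_def)
  have "transpose_mat (g * h) * Jmat n * (g * h) = transpose_mat h * ((transpose_mat g * Jmat n * g) * h)"
    using gc hc by (simp add: transpose_mult[OF gc hc] sq)
  also have "\<dots> = a \<cdot>\<^sub>m (transpose_mat h * Jmat n * h)"
    using gc hc by (simp add: ga sq mult_smult_assoc_mat[of _ "2*n" "2*n" _ "2*n"])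
  also have "\<dots> = (a * b) \<cdot>\<^sub>m Jmat n"
    by (simp add: hb)
  finally show ?thesis using gc hc a b by (auto simp: GSp_def intro!: exI[of _ "a * b"])
qed

definition sp_inv :: "nat \<Rightarrow> 'a::field mat \<Rightarrow> 'a mat" where
  "sp_inv n g = (-1 / sim n g) \<cdot>\<^sub>m (Jmat n * transpose_mat g * Jmat n)"

lemma sp_inv_carrier [simp]: "g \<in> carrier_mat (2*n) (2*n) \<Longrightarrow> sp_inv n g \<in> carrier_mat (2*n) (2*n)"
  by (simp add: sp_inv_def mult_carrier_mat[of _ "2*n" "2*n" _ "2*n"])

lemma sp_inv_left:
  assumes g: "g \<in> GSp n" and n: "n > 0"
  shows "sp_inv n g * g = 1\<^sub>m (2*n)"
proof -
  note sq = assoc_mult_mat[of _ "2*n" "2*n" _ "2*n" _ "2*n"] mult_carrier_mat[of _ "2*n" "2*n" _ "2*n"]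
    mult_smult_distrib[of _ "2*n" "2*n" _ "2*n"] mult_smult_assoc_mat[of _ "2*n" "2*n" _ "2*n"]
  have gc: "g \<in> carrier_mat (2*n) (2*n)" using GSp_carrier[OF g] .
  have "sp_inv n g * g = (-1 / sim n g) \<cdot>\<^sub>m (Jmat n * (transpose_mat g * Jmat n * g))"
    using gc by (simp add: sp_inv_def sq)
  also have "\<dots> = (-1 / sim n g * sim n g) \<cdot>\<^sub>m (Jmat n * Jmat n)"
    by (simp add: GSp_sim(2)[OF g n] sq)
  also have "\<dots> = 1\<^sub>m (2*n)"
    using GSp_sim(1)[OF g n] by (simp add: Jmat_mult_Jmat)
  finally show ?thesis .
qed

lemma sp_inv_right:
  assumes g: "g \<in> GSp n" and n: "n > 0"
  shows "g * sp_inv n g = 1\<^sub>m (2*n)"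
  using mat_mult_left_right_inverse[OF sp_inv_carrier GSp_carrier sp_inv_left] g n GSp_carrier
  by blast

lemma GSp_transpose:
  assumes g: "g \<in> GSp n" and n: "n > 0"
  shows "g * Jmat n * transpose_mat g = sim n g \<cdot>\<^sub>m Jmat n"
proof -
  note sq = assoc_mult_mat[of _ "2*n" "2*n" _ "2*n" _ "2*n"] mult_carrier_mat[of _ "2*n" "2*n" _ "2*n"]
    mult_smult_distrib[of _ "2*n" "2*n" _ "2*n"] mult_smult_assoc_mat[of _ "2*n" "2*n" _ "2*n"]
  have gc: "g \<in> carrier_mat (2*n) (2*n)" using GSp_carrier[OF g] .
  have m: "sim n g \<noteq> 0" using GSp_sim(1)[OF g n] .
  define K where "K = g * Jmat n * transpose_mat g"
  have K: "K \<in> carrier_mat (2*n) (2*n)" using gc by (simp add: K_def sq)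
  have inv: "(-1 / sim n g) \<cdot>\<^sub>m (K * Jmat n) = 1\<^sub>m (2*n)"
    using sp_inv_right[OF g n] gc by (simp add: sp_inv_def K_def sq)
  have "K * Jmat n = (- sim n g) \<cdot>\<^sub>m ((-1 / sim n g) \<cdot>\<^sub>m (K * Jmat n))"
    using m by simp
  hence KJ: "K * Jmat n = (- sim n g) \<cdot>\<^sub>m 1\<^sub>m (2*n)"
    by (simp only: inv)
  have "(- 1) \<cdot>\<^sub>m K = K * (Jmat n * Jmat n)"
    using K by (simp add: Jmat_mult_Jmat sq)
  also have "\<dots> = (- sim n g) \<cdot>\<^sub>m Jmat n"
    using K by (simp add: KJ sq flip: assoc_mult_mat[OF K Jmat_carrier Jmat_carrier])
  finally have "(- 1) \<cdot>\<^sub>m ((- 1) \<cdot>\<^sub>m K) = (- 1) \<cdot>\<^sub>m ((- sim n g) \<cdot>\<^sub>m Jmat n)"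
    by simp
  thus ?thesis by (simp add: K_def)
qed

lemma gram_rows_GSp:
  assumes g: "g \<in> GSp n" and n: "n > 0" and ij: "i < 2*n" "j < 2*n"
  shows "sform n (\<lambda>k. g $$ (i,k)) (\<lambda>k. g $$ (j,k)) = sim n g * Jmat n $$ (i,j)"
proof -
  have "(transpose_mat (transpose_mat g) * Jmat n * transpose_mat g) $$ (i,j) = (sim n g \<cdot>\<^sub>m Jmat n) $$ (i,j)"
    using GSp_transpose[OF g n] by simp
  moreover have "sform n (\<lambda>k. g $$ (i,k)) (\<lambda>k. g $$ (j,k))
      = sform n (\<lambda>k. transpose_mat g $$ (k,i)) (\<lambda>k. transpose_mat g $$ (k,j))"
    using GSp_carrier[OF g] ij by (intro sform_cong) auto
  ultimately show ?thesis using ij gram_entry[of "transpose_mat g" n i j] GSp_carrier[OF g] by simp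
qed

lemma GSp_by_gram_rows:
  assumes g: "g \<in> carrier_mat (2*n) (2*n)" and m: "m \<noteq> 0" and n: "n > 0"
    and gram: "\<And>i j. i < 2*n \<Longrightarrow> j < 2*n \<Longrightarrow>
                 sform n (\<lambda>k. g $$ (i,k)) (\<lambda>k. g $$ (j,k)) = m * Jmat n $$ (i,j)"
  shows "g \<in> GSp n"
proof -
  have "sform n (\<lambda>k. transpose_mat g $$ (k,i)) (\<lambda>k. transpose_mat g $$ (k,j)) = m * Jmat n $$ (i,j)"
    if ij: "i < 2*n" "j < 2*n" for i j
    using gram[OF ij] g ij by (subst sform_cong[of n _ "\<lambda>k. g $$ (i,k)" _ "\<lambda>k. g $$ (j,k)"]) auto
  hence gT: "transpose_mat g \<in> GSp n" "sim n (transpose_mat g) = m"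
    using GSp_by_gram[of "transpose_mat g" n m] g m n by auto
  have "transpose_mat g * Jmat n * g = m \<cdot>\<^sub>m Jmat n"
    using GSp_transpose[OF gT(1) n] gT(2) by simp
  thus ?thesis using g m by (auto simp: GSp_def)
qed

lemma sp_inv_GSp:
  assumes g: "g \<in> GSp n" and n: "n > 0"
  shows "sp_inv n g \<in> GSp n"
proof -
  note sq = assoc_mult_mat[of _ "2*n" "2*n" _ "2*n" _ "2*n"] mult_carrier_mat[of _ "2*n" "2*n" _ "2*n"]
    mult_smult_distrib[of _ "2*n" "2*n" _ "2*n"] mult_smult_assoc_mat[of _ "2*n" "2*n" _ "2*n"]
  have gc: "g \<in> carrier_mat (2*n) (2*n)" using GSp_carrier[OF g] .
  have m: "sim n g \<noteq> 0" using GSp_sim(1)[OF g n] .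
  define X where "X = sp_inv n g"
  have X: "X \<in> carrier_mat (2*n) (2*n)" using gc by (simp add: X_def)
  have "Jmat n = transpose_mat (g * X) * Jmat n * (g * X)"
    using sp_inv_right[OF g n] by (simp add: X_def)
  also have "\<dots> = transpose_mat X * ((transpose_mat g * Jmat n * g) * X)"
    using gc X by (simp add: transpose_mult[OF gc X] sq)
  also have "\<dots> = sim n g \<cdot>\<^sub>m (transpose_mat X * Jmat n * X)"
    using X by (simp add: GSp_sim(2)[OF g n] sq)
  finally have "(1 / sim n g) \<cdot>\<^sub>m Jmat n
      = (1 / sim n g) \<cdot>\<^sub>m (sim n g \<cdot>\<^sub>m (transpose_mat X * Jmat n * X))"
    by simp
  hence "transpose_mat X * Jmat n * X = (1 / sim n g) \<cdot>\<^sub>m Jmat n"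
    using m by simp
  thus ?thesis using X m by (auto simp: GSp_def X_def intro!: exI[of _ "1 / sim n g"])
qed

lemma parabolic_char:
  assumes mn: "m \<le> 2*n"
  shows "parabolic n m = {g \<in> GSp n. \<forall>i j. m \<le> i \<and> i < 2*n \<and> j < m \<longrightarrow> g$$(i,j) = 0}"
proof (rule Set.set_eqI, rule iffI)
  fix g :: "'a mat" assume g: "g \<in> parabolic n m"
  hence gG: "g \<in> GSp n" and gc: "g \<in> carrier_mat (2*n) (2*n)" by (auto simp: parabolic_def GSp_def)
  have "g$$(i,j) = 0" if ij: "m \<le> i" "i < 2*n" "j < m" for i j
  proof -
    have "(g *\<^sub>v unit_vec (2*n) j) $ i = 0"
      using g ij mn unfolding parabolic_def by auto
    thus "g$$(i,j) = 0" using gc ij mn by simp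
  qed
  thus "g \<in> {g \<in> GSp n. \<forall>i j. m \<le> i \<and> i < 2*n \<and> j < m \<longrightarrow> g$$(i,j) = 0}" using gG by auto
next
  fix g :: "'a mat" assume "g \<in> {g \<in> GSp n. \<forall>i j. m \<le> i \<and> i < 2*n \<and> j < m \<longrightarrow> g$$(i,j) = 0}"
  hence gG: "g \<in> GSp n" and z: "\<And>i j. m \<le> i \<Longrightarrow> i < 2*n \<Longrightarrow> j < m \<Longrightarrow> g$$(i,j) = 0" by auto
  have gc: "g \<in> carrier_mat (2*n) (2*n)" using GSp_carrier[OF gG] .
  show "g \<in> parabolic n m" unfolding parabolic_def
  proof (intro CollectI conjI gG ballI impI allI)
    fix v :: "'a vec" and i assume v: "v \<in> carrier_vec (2*n)"
      and vz: "\<forall>i. m \<le> i \<and> i < 2*n \<longrightarrow> v $ i = 0" and i: "m \<le> i \<and> i < 2*n"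
    have "(g *\<^sub>v v) $ i = (\<Sum>k\<in>{0..<2*n}. g$$(i,k) * v$k)"
      using gc v i by (simp add: scalar_prod_def)
    also have "\<dots> = 0"
      using z[of i] vz i by (intro sum.neutral) (metis atLeastLessThan_iff mult_eq_0_iff not_le)
    finally show "(g *\<^sub>v v) $ i = 0" .
  qed
qed

section \<open>The groups in dimension six\<close>

lemma less_2_cases: "(i::nat) < 2 \<Longrightarrow> i = 0 \<or> i = 1" by auto
lemma less_4_cases: "(i::nat) < 4 \<Longrightarrow> i = 0 \<or> i = 1 \<or> i = 2 \<or> i = 3" by auto
lemma less_6_cases: "(i::nat) < 6 \<Longrightarrow> i = 0 \<or> i = 1 \<or> i = 2 \<or> i = 3 \<or> i = 4 \<or> i = 5" by auto

lemma sum_lessThan_6: "(\<Sum>k<(6::nat). g k) = g 0 + g 1 + g 2 + g 3 + g 4 + (g 5 :: 'a::comm_monoid_add)"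
  by (simp add: numeral_eq_Suc add.assoc)

lemma mult_mat_4_entry:
  "A \<in> carrier_mat 4 4 \<Longrightarrow> B \<in> carrier_mat 4 4 \<Longrightarrow> i < 4 \<Longrightarrow> j < 4 \<Longrightarrow>
   (A * B) $$ (i,j) = A$$(i,0)*B$$(0,j) + A$$(i,1)*B$$(1,j) + A$$(i,2)*B$$(2,j) + A$$(i,3)*B$$(3,j)"
  by (simp add: mult_mat_entry numeral_eq_Suc add.assoc)

lemma mult_mat_6_entry:
  "A \<in> carrier_mat 6 6 \<Longrightarrow> B \<in> carrier_mat 6 6 \<Longrightarrow> i < 6 \<Longrightarrow> j < 6 \<Longrightarrow>
   (A * B) $$ (i,j) = A$$(i,0)*B$$(0,j) + A$$(i,1)*B$$(1,j) + A$$(i,2)*B$$(2,j)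
                    + A$$(i,3)*B$$(3,j) + A$$(i,4)*B$$(4,j) + A$$(i,5)*B$$(5,j)"
  by (simp add: mult_mat_entry numeral_eq_Suc add.assoc)

lemma Jmat3_carrier [simp]: "Jmat 3 \<in> carrier_mat 6 6"
  using Jmat_carrier[of 3] by simp

lemma mult_carrier_mat_6 [simp]:
  "A \<in> carrier_mat 6 6 \<Longrightarrow> B \<in> carrier_mat 6 6 \<Longrightarrow> A * B \<in> carrier_mat 6 6"
  by (rule mult_carrier_mat)

lemma assoc_mult_mat_6 [simp]:
  "A \<in> carrier_mat 6 6 \<Longrightarrow> B \<in> carrier_mat 6 6 \<Longrightarrow> C \<in> carrier_mat 6 6 \<Longrightarrow> A * B * C = A * (B * C)"
  by (rule assoc_mult_mat)

lemma det_1x1: "A \<in> carrier_mat 1 1 \<Longrightarrow> det A = A $$ (0,0)"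
  using laplace_expansion_column[of A 1 0] by (simp add: cofactor_def det_def')

lemma det_2x2: "A \<in> carrier_mat 2 2 \<Longrightarrow> det A = A$$(0,0) * A$$(1,1) - A$$(0,1) * A$$(1,0)"
  using laplace_expansion_column[of A 2 0]
  by (simp add: cofactor_def numeral_eq_Suc det_1x1 mat_delete_carrier mat_delete_def)

(* Keep the index 1 a numeral: simp would otherwise turn it into Suc 0, and facts about
   entries such as g $$ (1,0) would no longer match. *)
declare One_nat_def [simp del]
lemmas Suc_0_eq_1 [simp] = One_nat_def [symmetric]

lemma GSp3_carrier: "g \<in> GSp 3 \<Longrightarrow> g \<in> carrier_mat 6 6"
  using GSp_carrier[of g 3] by simp

lemma GSp2_carrier: "g \<in> GSp 2 \<Longrightarrow> g \<in> carrier_mat 4 4"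
  using GSp_carrier[of g 2] by simp

lemma one_GSp3: "(1\<^sub>m 6 :: 'a::field mat) \<in> GSp 3"
  using one_GSp[of 3] by simp

lemma GSp3_gram:
  assumes "g \<in> GSp 3" "i < 6" "j < 6"
  shows "sform 3 (\<lambda>k. g $$ (k,i)) (\<lambda>k. g $$ (k,j)) = sim 3 g * Jmat 3 $$ (i,j)"
    and "sform 3 (\<lambda>k. g $$ (i,k)) (\<lambda>k. g $$ (j,k)) = sim 3 g * Jmat 3 $$ (i,j)"
  using gram_GSp[of g 3 i j] gram_rows_GSp[of g 3 i j] assms by simp_all

lemma GSp2_gram:
  assumes "g \<in> GSp 2" "i < 4" "j < 4"
  shows "sform 2 (\<lambda>k. g $$ (k,i)) (\<lambda>k. g $$ (k,j)) = sim 2 g * Jmat 2 $$ (i,j)"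
  using gram_GSp[of g 2 i j] assms by simp

lemma GSp3_inverse:
  assumes "g \<in> GSp 3"
  shows "sp_inv 3 g \<in> GSp 3" "sp_inv 3 g * g = 1\<^sub>m 6" "g * sp_inv 3 g = 1\<^sub>m 6"
  using sp_inv_GSp[of g 3] sp_inv_left[of g 3] sp_inv_right[of g 3] assms by simp_all

lemma GSp1_eq_GL2: "GSp 1 = (GL2 :: 'a::field mat set)"
proof (rule Set.set_eqI, rule iffI)
  fix g :: "'a mat" assume g: "g \<in> GSp 1"
  have "sform 1 (\<lambda>k. g $$ (k,0)) (\<lambda>k. g $$ (k,1)) = sim 1 g * Jmat 1 $$ (0,1)"
    using gram_GSp[OF g] by simp
  hence "det g = sim 1 g"
    using GSp_carrier[OF g] by (simp add: sform_expand det_2x2 Jmat_entry algebra_simps)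
  thus "g \<in> GL2" using g GSp_sim(1)[OF g] GSp_carrier[OF g] by (simp add: GL2_def)
next
  fix g :: "'a mat" assume "g \<in> GL2"
  hence g: "g \<in> carrier_mat 2 2" and d: "det g \<noteq> 0" by (auto simp: GL2_def)
  have "sform 1 (\<lambda>k. g $$ (k,i)) (\<lambda>k. g $$ (k,j)) = det g * Jmat 1 $$ (i,j)" if "i < 2" "j < 2" for i j
    using less_2_cases[OF that(1)] less_2_cases[OF that(2)] g
    by (elim disjE) (simp_all add: sform_expand det_2x2 Jmat_entry algebra_simps)
  thus "g \<in> GSp 1" using GSp_by_gram(1)[of g 1 "det g"] g d by simp
qed

(* Indices 0, 5 are the coordinates e1, f1 of the GL2 factor, indices 1..4 those of the GSp4 factor. *)
definition block_diag :: "'a::zero mat \<Rightarrow> bool" where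
  "block_diag h \<longleftrightarrow> (\<forall>i<6. \<forall>j<6. (i = 0 \<or> i = 5) \<noteq> (j = 0 \<or> j = 5) \<longrightarrow> h $$ (i,j) = 0)"

definition outer_block :: "'a mat \<Rightarrow> 'a mat" where
  "outer_block h = mat 2 2 (\<lambda>(a,b). h $$ (5*a, 5*b))"

definition inner_block :: "'a mat \<Rightarrow> 'a mat" where
  "inner_block h = mat 4 4 (\<lambda>(a,b). h $$ (a+1, b+1))"

lemma outer_block_carrier [simp]: "outer_block h \<in> carrier_mat 2 2"
  by (simp add: outer_block_def)

lemma inner_block_carrier [simp]: "inner_block h \<in> carrier_mat 4 4"
  by (simp add: inner_block_def)

lemma outer_block_entry:
  "outer_block h $$ (0,0) = h $$ (0,0)" "outer_block h $$ (0,1) = h $$ (0,5)"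
  "outer_block h $$ (1,0) = h $$ (5,0)" "outer_block h $$ (1,1) = h $$ (5,5)"
  by (simp_all add: outer_block_def)

lemma inner_block_entry: "i < 4 \<Longrightarrow> j < 4 \<Longrightarrow> inner_block h $$ (i,j) = h $$ (i+1, j+1)"
  by (simp add: inner_block_def)

lemma block_diag_zero:
  assumes "block_diag h"
  shows "h$$(0,1) = 0" "h$$(0,2) = 0" "h$$(0,3) = 0" "h$$(0,4) = 0"
    "h$$(5,1) = 0" "h$$(5,2) = 0" "h$$(5,3) = 0" "h$$(5,4) = 0"
    "h$$(1,0) = 0" "h$$(2,0) = 0" "h$$(3,0) = 0" "h$$(4,0) = 0"
    "h$$(1,5) = 0" "h$$(2,5) = 0" "h$$(3,5) = 0" "h$$(4,5) = 0"
  using assms unfolding block_diag_def by auto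

lemma block_diagI:
  assumes "h$$(0,1) = 0" "h$$(0,2) = 0" "h$$(0,3) = 0" "h$$(0,4) = 0"
    "h$$(5,1) = 0" "h$$(5,2) = 0" "h$$(5,3) = 0" "h$$(5,4) = 0"
    "h$$(1,0) = 0" "h$$(2,0) = 0" "h$$(3,0) = 0" "h$$(4,0) = 0"
    "h$$(1,5) = 0" "h$$(2,5) = 0" "h$$(3,5) = 0" "h$$(4,5) = 0"
  shows "block_diag h"
  unfolding block_diag_def
proof (intro allI impI)
  fix i j :: nat assume "i < 6" "j < 6" "(i = 0 \<or> i = 5) \<noteq> (j = 0 \<or> j = 5)"
  thus "h $$ (i,j) = 0" using less_6_cases[of i] less_6_cases[of j] assms by auto
qed

lemma iota_carrier [simp]: "iota h1 h2 \<in> carrier_mat 6 6"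
  by (simp add: iota_def)

lemma iota_entry:
  "i < 6 \<Longrightarrow> j < 6 \<Longrightarrow> iota h1 h2 $$ (i,j) =
     (if (i = 0 \<or> i = 5) \<and> (j = 0 \<or> j = 5) then h1 $$ (i div 5, j div 5)
      else if 1 \<le> i \<and> i \<le> 4 \<and> 1 \<le> j \<and> j \<le> 4 then h2 $$ (i - 1, j - 1)
      else 0)"
  by (simp add: iota_def)

lemma block_diag_iota: "block_diag (iota h1 h2)"
  by (rule block_diagI) (simp_all add: iota_entry)

lemma outer_block_iota: "h1 \<in> carrier_mat 2 2 \<Longrightarrow> outer_block (iota h1 h2) = h1"
  by (rule eq_matI) (auto simp: outer_block_def iota_entry dest!: less_2_cases)

lemma inner_block_iota: "h2 \<in> carrier_mat 4 4 \<Longrightarrow> inner_block (iota h1 h2) = h2"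
  by (rule eq_matI) (auto simp: inner_block_def iota_entry dest!: less_4_cases)

lemma iota_outer_inner_block:
  assumes h: "h \<in> carrier_mat 6 6" and b: "block_diag h"
  shows "iota (outer_block h) (inner_block h) = h"
proof (rule eq_matI)
  fix i j assume "i < dim_row h" "j < dim_col h"
  hence "i < 6" "j < 6" using h by auto
  thus "iota (outer_block h) (inner_block h) $$ (i,j) = h $$ (i,j)"
    using less_6_cases[of i] less_6_cases[of j]
    by (auto simp: iota_entry inner_block_def outer_block_def block_diag_zero[OF b])
qed (use h in \<open>auto simp: iota_def\<close>)

lemma sform_iota_cols:
  assumes "i < 6" "j < 6"
  shows "sform 3 (\<lambda>k. iota h1 h2 $$ (k,i)) (\<lambda>k. iota h1 h2 $$ (k,j)) =
    (if (i = 0 \<or> i = 5) \<and> (j = 0 \<or> j = 5)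
       then sform 1 (\<lambda>k. h1 $$ (k, i div 5)) (\<lambda>k. h1 $$ (k, j div 5))
     else if 1 \<le> i \<and> i \<le> 4 \<and> 1 \<le> j \<and> j \<le> 4
       then sform 2 (\<lambda>k. h2 $$ (k, i - 1)) (\<lambda>k. h2 $$ (k, j - 1))
     else 0)"
  using less_6_cases[OF assms(1)] less_6_cases[OF assms(2)]
  by (elim disjE) (simp_all add: sform_expand iota_entry)

lemma Jmat3_blocks:
  assumes "i < 6" "j < 6"
  shows "(Jmat 3 :: 'a::comm_ring_1 mat) $$ (i,j) =
    (if (i = 0 \<or> i = 5) \<and> (j = 0 \<or> j = 5) then Jmat 1 $$ (i div 5, j div 5)
     else if 1 \<le> i \<and> i \<le> 4 \<and> 1 \<le> j \<and> j \<le> 4 then Jmat 2 $$ (i - 1, j - 1)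
     else 0)"
  using less_6_cases[OF assms(1)] less_6_cases[OF assms(2)]
  by (elim disjE) (simp_all add: Jmat_entry)

lemma iota_GSp3:
  assumes h1: "h1 \<in> GL2" and h2: "h2 \<in> GSp 2" and d: "det h1 = sim 2 h2"
  shows "iota h1 h2 \<in> GSp 3" "sim 3 (iota h1 h2) = det h1"
proof -
  have h1G: "h1 \<in> GSp 1" using h1 GSp1_eq_GL2 by blast
  have "sim 1 h1 = det h1"
    using gram_GSp[OF h1G, of 0 1] GSp_carrier[OF h1G] by (simp add: sform_expand det_2x2 Jmat_entry algebra_simps)
  hence "sform 3 (\<lambda>k. iota h1 h2 $$ (k,i)) (\<lambda>k. iota h1 h2 $$ (k,j)) = det h1 * Jmat 3 $$ (i,j)"
    if "i < 2*3" "j < 2*3" for i j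
    using that gram_GSp[OF h1G, of "i div 5" "j div 5"] GSp2_gram[OF h2, of "i - 1" "j - 1"] d
    by (auto simp: sform_iota_cols Jmat3_blocks)
  thus "iota h1 h2 \<in> GSp 3" "sim 3 (iota h1 h2) = det h1"
    using GSp_by_gram[of "iota h1 h2" 3 "det h1"] h1 by (auto simp: GL2_def)
qed

lemma sform_inner_block:
  assumes "block_diag h" "a < 4" "b < 4"
  shows "sform 2 (\<lambda>k. inner_block h $$ (k,a)) (\<lambda>k. inner_block h $$ (k,b))
       = sform 3 (\<lambda>k. h $$ (k, a+1)) (\<lambda>k. h $$ (k, b+1))"
  using less_4_cases[OF assms(2)] less_4_cases[OF assms(3)]
  by (elim disjE) (simp_all add: sform_expand inner_block_def block_diag_zero[OF assms(1)])

lemma det_outer_block: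
  "block_diag h \<Longrightarrow> det (outer_block h) = sform 3 (\<lambda>k. h $$ (k,0)) (\<lambda>k. h $$ (k,5))"
  by (simp add: det_2x2 outer_block_def sform_expand block_diag_zero)

lemma Hgrp_char: "Hgrp = {h \<in> GSp 3. block_diag h}"
proof (rule Set.set_eqI, rule iffI)
  fix h :: "'a mat" assume "h \<in> Hgrp"
  then obtain h1 h2 where "h = iota h1 h2" "h1 \<in> GL2" "h2 \<in> GSp 2" "det h1 = sim 2 h2"
    by (auto simp: Hgrp_def fiber_prod_def)
  thus "h \<in> {h \<in> GSp 3. block_diag h}" using iota_GSp3 block_diag_iota by auto
next
  fix h :: "'a mat" assume "h \<in> {h \<in> GSp 3. block_diag h}"
  hence g: "h \<in> GSp 3" and b: "block_diag h" by auto
  have dt: "det (outer_block h) = sim 3 h"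
    using det_outer_block[OF b] GSp3_gram(1)[OF g, of 0 5] by (simp add: Jmat_entry)
  have "sform 2 (\<lambda>k. inner_block h $$ (k,i)) (\<lambda>k. inner_block h $$ (k,j)) = sim 3 h * Jmat 2 $$ (i,j)"
    if "i < 2*2" "j < 2*2" for i j
    using that sform_inner_block[OF b, of i j] GSp3_gram(1)[OF g, of "i+1" "j+1"] Jmat3_blocks[of "i+1" "j+1"]
    by auto
  hence "inner_block h \<in> GSp 2" "sim 2 (inner_block h) = sim 3 h"
    using GSp_by_gram[of "inner_block h" 2 "sim 3 h"] GSp_sim(1)[OF g] by auto
  moreover have "outer_block h \<in> GL2" using dt GSp_sim(1)[OF g] by (simp add: GL2_def)
  ultimately have "(outer_block h, inner_block h) \<in> fiber_prod GL2 (GSp 2)"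
    using dt by (simp add: fiber_prod_def)
  thus "h \<in> Hgrp" unfolding Hgrp_def using iota_outer_inner_block[OF GSp3_carrier[OF g] b] by force
qed

(* P22 stabilizes <e1,e2> in the column action, equivalently <f2,f1> in the row action. *)
definition lower_left_4x2_zero :: "'a::zero mat \<Rightarrow> bool" where
  "lower_left_4x2_zero p \<longleftrightarrow> (\<forall>i j. 2 \<le> i \<and> i < 6 \<and> j < 2 \<longrightarrow> p$$(i,j) = 0)"

definition lower_left_2x4_zero :: "'a::zero mat \<Rightarrow> bool" where
  "lower_left_2x4_zero p \<longleftrightarrow> (\<forall>k<4. p$$(4,k) = 0 \<and> p$$(5,k) = 0)"

lemma lower_left_4x2_zero_iff:
  "lower_left_4x2_zero p \<longleftrightarrow> p$$(2,0) = 0 \<and> p$$(3,0) = 0 \<and> p$$(4,0) = 0 \<and> p$$(5,0) = 0 \<and>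
     p$$(2,1) = 0 \<and> p$$(3,1) = 0 \<and> p$$(4,1) = 0 \<and> p$$(5,1) = 0"
proof
  assume H: "p$$(2,0) = 0 \<and> p$$(3,0) = 0 \<and> p$$(4,0) = 0 \<and> p$$(5,0) = 0 \<and>
     p$$(2,1) = 0 \<and> p$$(3,1) = 0 \<and> p$$(4,1) = 0 \<and> p$$(5,1) = 0"
  show "lower_left_4x2_zero p" unfolding lower_left_4x2_zero_def
  proof (intro allI impI)
    fix i j :: nat assume "2 \<le> i \<and> i < 6 \<and> j < 2"
    hence "i = 2 \<or> i = 3 \<or> i = 4 \<or> i = 5" "j = 0 \<or> j = 1" by auto
    thus "p$$(i,j) = 0" using H by auto
  qed
qed (simp add: lower_left_4x2_zero_def)

lemma lower_left_2x4_zero_iff: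
  "lower_left_2x4_zero p \<longleftrightarrow> p$$(4,0) = 0 \<and> p$$(4,1) = 0 \<and> p$$(4,2) = 0 \<and> p$$(4,3) = 0 \<and>
     p$$(5,0) = 0 \<and> p$$(5,1) = 0 \<and> p$$(5,2) = 0 \<and> p$$(5,3) = 0"
  unfolding lower_left_2x4_zero_def by (auto dest!: less_4_cases)

lemma P22_char: "P22 = {p \<in> GSp 3. lower_left_4x2_zero p}"
  unfolding P22_def lower_left_4x2_zero_def using parabolic_char[of 2 3] by simp

lemma det_nonzero_of_inverse_2x2:
  fixes a :: "'a::field"
  assumes "x1*a + y1*b = m" "x1*c + y1*d = 0" "x2*a + y2*b = 0" "x2*c + y2*d = m" "m \<noteq> 0"
  shows "a*d - b*c \<noteq> 0" "x1*y2 - y1*x2 \<noteq> 0"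
proof -
  have "(x1*y2 - y1*x2) * (a*d - b*c) = (x1*a + y1*b) * (x2*c + y2*d) - (x1*c + y1*d) * (x2*a + y2*b)"
    by (simp add: algebra_simps)
  hence "(x1*y2 - y1*x2) * (a*d - b*c) = m * m" using assms by simp
  thus "a*d - b*c \<noteq> 0" "x1*y2 - y1*x2 \<noteq> 0" using assms(5) by auto
qed

lemma linear_2x2_unique_zero:
  fixes a :: "'a::field"
  assumes "a*x + b*y = 0" "c*x + d*y = 0" "a*d - b*c \<noteq> 0"
  shows "x = 0" "y = 0"
proof -
  have "(a*d - b*c) * x = d * (a*x + b*y) - b * (c*x + d*y)"
    "(a*d - b*c) * y = a * (c*x + d*y) - c * (a*x + b*y)" by (simp_all add: algebra_simps)
  thus "x = 0" "y = 0" using assms by simp_all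
qed

lemma lower_left_2x4_zero_if_4x2_zero:
  assumes p: "p \<in> GSp 3" and z: "lower_left_4x2_zero p"
  shows "lower_left_2x4_zero p"
proof -
  define m where "m = sim 3 p"
  have m: "m \<noteq> 0" using GSp_sim(1)[OF p] by (simp add: m_def)
  have C: "\<And>i j. i < 6 \<Longrightarrow> j < 6 \<Longrightarrow> sform 3 (\<lambda>k. p $$ (k,i)) (\<lambda>k. p $$ (k,j)) = m * Jmat 3 $$ (i,j)"
    using GSp3_gram(1)[OF p] by (simp add: m_def)
  note z' = z[unfolded lower_left_4x2_zero_iff]
  have "p$$(0,0)*p$$(5,5) + p$$(1,0)*p$$(4,5) = m" "p$$(0,0)*p$$(5,4) + p$$(1,0)*p$$(4,4) = 0"
    "p$$(0,1)*p$$(5,5) + p$$(1,1)*p$$(4,5) = 0" "p$$(0,1)*p$$(5,4) + p$$(1,1)*p$$(4,4) = m"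
    using C[of 0 5] C[of 0 4] C[of 1 5] C[of 1 4] z' by (simp_all add: sform_expand Jmat_entry)
  hence D: "p$$(0,0)*p$$(1,1) - p$$(1,0)*p$$(0,1) \<noteq> 0"
    using det_nonzero_of_inverse_2x2(2) m by blast
  have "p$$(4,k) = 0 \<and> p$$(5,k) = 0" if k: "k < 4" for k
  proof -
    have "p$$(0,0)*p$$(5,k) + p$$(1,0)*p$$(4,k) = 0" "p$$(0,1)*p$$(5,k) + p$$(1,1)*p$$(4,k) = 0"
      using C[of 0 k] C[of 1 k] k z' by (simp_all add: sform_expand Jmat_entry)
    thus ?thesis using linear_2x2_unique_zero[OF _ _ D] by blast
  qed
  thus ?thesis by (simp add: lower_left_2x4_zero_def)
qed

lemma lower_left_4x2_zero_if_2x4_zero: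
  assumes p: "p \<in> GSp 3" and z: "lower_left_2x4_zero p"
  shows "lower_left_4x2_zero p"
proof -
  define m where "m = sim 3 p"
  have m: "m \<noteq> 0" using GSp_sim(1)[OF p] by (simp add: m_def)
  have R: "\<And>i j. i < 6 \<Longrightarrow> j < 6 \<Longrightarrow> sform 3 (\<lambda>k. p $$ (i,k)) (\<lambda>k. p $$ (j,k)) = m * Jmat 3 $$ (i,j)"
    using GSp3_gram(2)[OF p] by (simp add: m_def)
  note z' = z[unfolded lower_left_2x4_zero_iff]
  have "p$$(0,0)*p$$(5,5) + p$$(0,1)*p$$(5,4) = m" "p$$(0,0)*p$$(4,5) + p$$(0,1)*p$$(4,4) = 0"
    "p$$(1,0)*p$$(5,5) + p$$(1,1)*p$$(5,4) = 0" "p$$(1,0)*p$$(4,5) + p$$(1,1)*p$$(4,4) = m"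
    using R[of 0 5] R[of 0 4] R[of 1 5] R[of 1 4] z' by (simp_all add: sform_expand Jmat_entry)
  hence D: "p$$(5,5)*p$$(4,4) - p$$(5,4)*p$$(4,5) \<noteq> 0"
    using det_nonzero_of_inverse_2x2(1) m by blast
  have "p$$(i,0) = 0 \<and> p$$(i,1) = 0" if i: "2 \<le> i" "i < 6" for i
  proof -
    have "p$$(5,5)*p$$(i,0) + p$$(5,4)*p$$(i,1) = 0" "p$$(4,5)*p$$(i,0) + p$$(4,4)*p$$(i,1) = 0"
      using R[of i 5] R[of i 4] i z' by (auto simp: sform_expand Jmat_entry algebra_simps)
    thus ?thesis using linear_2x2_unique_zero[OF _ _ D] by blast
  qed
  thus ?thesis unfolding lower_left_4x2_zero_def using less_2_cases by blast
qed

lemma P22_char_rows: "P22 = {p \<in> GSp 3. lower_left_2x4_zero p}"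
  using lower_left_2x4_zero_if_4x2_zero lower_left_4x2_zero_if_2x4_zero unfolding P22_char by blast

lemma P22_carrier: "p \<in> P22 \<Longrightarrow> p \<in> carrier_mat 6 6"
  by (simp add: P22_char GSp3_carrier)

lemma one_P22: "(1\<^sub>m 6 :: 'a::field mat) \<in> P22"
  unfolding P22_char lower_left_4x2_zero_def using one_GSp3 by auto

lemma P22_mult:
  assumes p: "p \<in> P22" and q: "q \<in> P22"
  shows "p * q \<in> P22"
proof -
  have "lower_left_4x2_zero (p * q)"
    using p q P22_carrier[OF p] P22_carrier[OF q]
    by (simp add: P22_char lower_left_4x2_zero_iff mult_mat_6_entry)
  thus ?thesis using p q by (auto simp: P22_char intro: GSp_mult)
qed

lemma P22_inverse:
  assumes p: "p \<in> P22"
  shows "sp_inv 3 p \<in> P22" "sp_inv 3 p * p = 1\<^sub>m 6" "p * sp_inv 3 p = 1\<^sub>m 6"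
proof -
  have pG: "p \<in> GSp 3" using p by (simp add: P22_char)
  show "sp_inv 3 p * p = 1\<^sub>m 6" "p * sp_inv 3 p = 1\<^sub>m 6" using GSp3_inverse[OF pG] by auto
  have "lower_left_2x4_zero (sp_inv 3 p)"
    using p P22_carrier[OF p] unfolding P22_char lower_left_2x4_zero_iff lower_left_4x2_zero_iff
    by (simp add: sp_inv_def mult_mat_6_entry Jmat_entry)
  thus "sp_inv 3 p \<in> P22" using GSp3_inverse(1)[OF pG] by (simp add: P22_char_rows)
qed

section \<open>Cosets and stabilizers\<close>

lemma Hgrp_carrier: "h \<in> Hgrp \<Longrightarrow> h \<in> carrier_mat 6 6"
  by (simp add: Hgrp_char GSp3_carrier)

lemma one_Hgrp: "(1\<^sub>m 6 :: 'a::field mat) \<in> Hgrp"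
  using one_GSp3 by (simp add: Hgrp_char block_diagI)

lemma Hgrp_mult:
  assumes h: "h \<in> Hgrp" and k: "k \<in> Hgrp"
  shows "h * k \<in> Hgrp"
proof -
  have "block_diag (h * k)"
    using block_diag_zero[of h] block_diag_zero[of k] h k Hgrp_carrier[OF h] Hgrp_carrier[OF k]
    by (intro block_diagI) (simp_all add: Hgrp_char mult_mat_6_entry)
  thus ?thesis using h k by (auto simp: Hgrp_char intro: GSp_mult)
qed

lemma Hgrp_inverse:
  assumes h: "h \<in> Hgrp"
  shows "sp_inv 3 h \<in> Hgrp" "sp_inv 3 h * h = 1\<^sub>m 6" "h * sp_inv 3 h = 1\<^sub>m 6"
proof -
  have hG: "h \<in> GSp 3" and b: "block_diag h" using h by (auto simp: Hgrp_char)
  show "sp_inv 3 h * h = 1\<^sub>m 6" "h * sp_inv 3 h = 1\<^sub>m 6" using GSp3_inverse[OF hG] by auto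
  have "block_diag (sp_inv 3 h)"
    using Hgrp_carrier[OF h]
    by (intro block_diagI) (simp_all add: sp_inv_def mult_mat_6_entry Jmat_entry block_diag_zero[OF b])
  thus "sp_inv 3 h \<in> Hgrp" using GSp3_inverse(1)[OF hG] by (simp add: Hgrp_char)
qed

lemma right_coset_mult_eq_iff:
  assumes g: "g \<in> carrier_mat 6 6" and h: "h \<in> carrier_mat 6 6" and X: "X \<in> carrier_mat 6 6"
    and gX: "g * X = 1\<^sub>m 6" and Xg: "X * g = 1\<^sub>m 6"
  shows "right_coset (g * h) = right_coset g \<longleftrightarrow> g * h * X \<in> P22"
proof
  assume eq: "right_coset (g * h) = right_coset g"
  have "g * h \<in> right_coset (g * h)" unfolding right_coset_def
    using one_P22 g h by (intro CollectI exI[of _ "1\<^sub>m 6"]) auto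
  then obtain p where p: "p \<in> P22" and gh: "g * h = p * g" using eq by (auto simp: right_coset_def)
  have "g * h * X = p" using gh P22_carrier[OF p] g X by (simp add: gX)
  thus "g * h * X \<in> P22" using p by simp
next
  assume P: "g * h * X \<in> P22"
  define p where "p = g * h * X"
  have p: "p \<in> P22" and pc: "p \<in> carrier_mat 6 6" using P P22_carrier by (auto simp: p_def)
  have pg: "p * g = g * h" unfolding p_def using g h X by (simp add: Xg)
  note q = P22_inverse[OF p]
  show "right_coset (g * h) = right_coset g"
  proof (rule Set.set_eqI, rule iffI)
    fix x assume "x \<in> right_coset (g * h)"
    then obtain r where r: "r \<in> P22" and x: "x = r * (g * h)" by (auto simp: right_coset_def)
    have "x = (r * p) * g" using x pg P22_carrier[OF r] pc g by simp
    thus "x \<in> right_coset g" using P22_mult[OF r p] by (auto simp: right_coset_def)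
  next
    fix x assume "x \<in> right_coset g"
    then obtain r where r: "r \<in> P22" and x: "x = r * g" by (auto simp: right_coset_def)
    have "r * g = r * ((sp_inv 3 p * p) * g)" using g by (simp add: q(2))
    also have "\<dots> = (r * sp_inv 3 p) * (g * h)" using P22_carrier[OF r] P22_carrier[OF q(1)] pc g h by (simp add: pg)
    finally show "x \<in> right_coset (g * h)" using P22_mult[OF r q(1)] x by (auto simp: right_coset_def)
  qed
qed

lemma stab_conj_char:
  assumes g: "g \<in> GSp 3" and X: "X \<in> GSp 3" and gX: "g * X = 1\<^sub>m 6" and Xg: "X * g = 1\<^sub>m 6"
  shows "stab g = {h \<in> Hgrp. lower_left_4x2_zero (g * h * X)}"
proof -
  have "right_coset (g * h) = right_coset g \<longleftrightarrow> lower_left_4x2_zero (g * h * X)" if h: "h \<in> Hgrp" for h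
  proof -
    have "g * h * X \<in> GSp 3" using g X h by (simp add: Hgrp_char GSp_mult)
    thus ?thesis using right_coset_mult_eq_iff[OF GSp3_carrier[OF g] Hgrp_carrier[OF h] GSp3_carrier[OF X] gX Xg]
      by (simp add: P22_char)
  qed
  thus ?thesis unfolding stab_def by blast
qed

lemma self_in_double_coset: "t \<in> carrier_mat 6 6 \<Longrightarrow> t \<in> double_coset t"
  unfolding double_coset_def using one_P22 one_Hgrp
  by (intro CollectI exI[of _ "1\<^sub>m 6"] exI[of _ t]) auto

lemma double_coset_eq:
  assumes t: "t \<in> carrier_mat 6 6" and g: "g \<in> double_coset t"
  shows "double_coset g = double_coset t"
proof -
  obtain p h where p: "p \<in> P22" and h: "h \<in> Hgrp" and gd: "g = p * t * h"
    using g by (auto simp: double_coset_def)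
  note pc = P22_carrier[OF p] and hc = Hgrp_carrier[OF h]
  note p' = P22_inverse[OF p] and h' = Hgrp_inverse[OF h]
  show ?thesis
  proof (rule Set.set_eqI, rule iffI)
    fix x assume "x \<in> double_coset g"
    then obtain q k where q: "q \<in> P22" and k: "k \<in> Hgrp" and x: "x = q * g * k"
      by (auto simp: double_coset_def)
    have "x = (q * p) * t * (h * k)" using x gd P22_carrier[OF q] Hgrp_carrier[OF k] pc hc t by simp
    thus "x \<in> double_coset t" using P22_mult[OF q p] Hgrp_mult[OF h k] by (auto simp: double_coset_def)
  next
    fix x assume "x \<in> double_coset t"
    then obtain q k where q: "q \<in> P22" and k: "k \<in> Hgrp" and x: "x = q * t * k"
      by (auto simp: double_coset_def)
    have "q * t * k = q * ((sp_inv 3 p * p) * t * (h * sp_inv 3 h)) * k"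
      using t P22_carrier[OF q] Hgrp_carrier[OF k] by (simp add: p'(2) h'(3))
    also have "\<dots> = (q * sp_inv 3 p) * g * (sp_inv 3 h * k)"
      using gd P22_carrier[OF q] Hgrp_carrier[OF k] pc hc t P22_carrier[OF p'(1)] Hgrp_carrier[OF h'(1)]
      by simp
    finally show "x \<in> double_coset g" using P22_mult[OF q p'(1)] Hgrp_mult[OF h'(1) k] x
      by (auto simp: double_coset_def)
  qed
qed

section \<open>The representatives, their planes and stabilizers\<close>

definition tau2_inv :: "'a::field mat" where
  "tau2_inv = mat_of_rows_list 6
     [[1,0,0,0,0,0],[0,1,0,0,0,0],[1,0,1,0,0,0],
      [0,0,0,1,0,0],[0,0,0,0,1,0],[0,0,0,-1,0,1]]"

definition tau_op_inv :: "'a::field mat" where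
  "tau_op_inv = mat_of_rows_list 6
     [[1,0,0,0,0,0],[0,1,0,0,0,0],[0,0,1,0,0,0],
      [0,0,0,1,0,0],[-1,0,0,0,1,0],[0,-1,0,0,0,1]]"

lemmas tau_defs = tau1_def tau2_def tau_op_def tau2_inv_def tau_op_inv_def mat_of_rows_list_def

lemma tau_carrier [simp]:
  "(tau1 :: 'a::field mat) \<in> carrier_mat 6 6" "(tau2 :: 'a::field mat) \<in> carrier_mat 6 6"
  "(tau_op :: 'a::field mat) \<in> carrier_mat 6 6" "(tau2_inv :: 'a::field mat) \<in> carrier_mat 6 6"
  "(tau_op_inv :: 'a::field mat) \<in> carrier_mat 6 6"
  by (simp_all add: tau_defs)

lemma mat_6_eqI:
  assumes "A \<in> carrier_mat 6 6" "B \<in> carrier_mat 6 6"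
    "\<And>i j. i < 6 \<Longrightarrow> j < 6 \<Longrightarrow> A $$ (i,j) = B $$ (i,j)"
  shows "A = B"
  using assms by (intro eq_matI) auto

lemma tau_mult_inv:
  "(tau1 :: 'a::field mat) * tau1 = 1\<^sub>m 6"
  "(tau2 :: 'a::field mat) * tau2_inv = 1\<^sub>m 6" "(tau2_inv :: 'a::field mat) * tau2 = 1\<^sub>m 6"
  "(tau_op :: 'a::field mat) * tau_op_inv = 1\<^sub>m 6" "(tau_op_inv :: 'a::field mat) * tau_op = 1\<^sub>m 6"
  by (rule mat_6_eqI, simp, simp, drule less_6_cases, drule less_6_cases,
      elim disjE; simp add: mult_mat_6_entry tau_defs)+



lemma GSp3_by_gram:
  assumes "g \<in> carrier_mat 6 6"
    "\<And>i j. i < 6 \<Longrightarrow> j < 6 \<Longrightarrow> sform 3 (\<lambda>k. g $$ (k,i)) (\<lambda>k. g $$ (k,j)) = Jmat 3 $$ (i,j)"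
  shows "g \<in> GSp 3"
  using GSp_by_gram(1)[of g 3 1] assms by simp

lemma tau_GSp3:
  "(tau1 :: 'a::field mat) \<in> GSp 3" "(tau2 :: 'a::field mat) \<in> GSp 3"
  "(tau_op :: 'a::field mat) \<in> GSp 3" "(tau2_inv :: 'a::field mat) \<in> GSp 3"
  "(tau_op_inv :: 'a::field mat) \<in> GSp 3"
  by (rule GSp3_by_gram, simp, drule less_6_cases, drule less_6_cases,
      elim disjE; simp add: tau_defs sform_expand Jmat_entry)+



lemma row_act_plane_basis:
  assumes g: "g \<in> carrier_mat 6 6"
  shows "row_act (c \<cdot>\<^sub>v f 1 + d \<cdot>\<^sub>v f 2) g = c \<cdot>\<^sub>v row g 5 + d \<cdot>\<^sub>v row g 4"
proof (rule eq_vecI)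
  fix i assume "i < dim_vec (c \<cdot>\<^sub>v row g 5 + d \<cdot>\<^sub>v row g 4)"
  hence i: "i < 6" using g by simp
  show "row_act (c \<cdot>\<^sub>v f 1 + d \<cdot>\<^sub>v f 2) g $ i = (c \<cdot>\<^sub>v row g 5 + d \<cdot>\<^sub>v row g 4) $ i"
    using g i by (simp add: row_act_def f_def scalar_prod_def sum_lessThan_6 lessThan_atLeast0[symmetric])
qed (use g in \<open>simp add: row_act_def\<close>)

lemma plane_of_eq_span_rows:
  assumes g: "g \<in> carrier_mat 6 6"
  shows "plane_of g = span2 (row g 5) (row g 4)"
proof (rule Set.set_eqI, rule iffI)
  fix x assume "x \<in> plane_of g"
  thus "x \<in> span2 (row g 5) (row g 4)"
    unfolding plane_of_def span2_def using row_act_plane_basis[OF g] by auto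
next
  fix x assume "x \<in> span2 (row g 5) (row g 4)"
  then obtain c d where "x = c \<cdot>\<^sub>v row g 5 + d \<cdot>\<^sub>v row g 4" by (auto simp: span2_def)
  thus "x \<in> plane_of g" unfolding plane_of_def span2_def
    by (intro image_eqI[of _ _ "c \<cdot>\<^sub>v f 1 + d \<cdot>\<^sub>v f 2"]) (auto simp: row_act_plane_basis[OF g])
qed

lemma span2_swap:
  assumes "u \<in> carrier_vec n" "w \<in> carrier_vec n"
  shows "span2 u w = span2 w u"
proof -
  have swap: "c \<cdot>\<^sub>v u + d \<cdot>\<^sub>v w = d \<cdot>\<^sub>v w + c \<cdot>\<^sub>v u" for c d
    using assms by (intro comm_add_vec) auto
  show ?thesis
  proof (unfold span2_def, intro Set.set_eqI iffI)
    fix x assume "x \<in> {c \<cdot>\<^sub>v u + d \<cdot>\<^sub>v w |c d. True}"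
    thus "x \<in> {c \<cdot>\<^sub>v w + d \<cdot>\<^sub>v u |c d. True}" using swap by blast
  next
    fix x assume "x \<in> {c \<cdot>\<^sub>v w + d \<cdot>\<^sub>v u |c d. True}"
    then obtain c d where "x = c \<cdot>\<^sub>v w + d \<cdot>\<^sub>v u" by blast
    hence "x = d \<cdot>\<^sub>v u + c \<cdot>\<^sub>v w" using swap[of d c] by simp
    thus "x \<in> {c \<cdot>\<^sub>v u + d \<cdot>\<^sub>v w |c d. True}" by blast
  qed
qed

lemma vec_6_eqI:
  "u \<in> carrier_vec 6 \<Longrightarrow> v \<in> carrier_vec 6 \<Longrightarrow> (\<And>i. i < 6 \<Longrightarrow> u $ i = v $ i) \<Longrightarrow> u = v"
  by (intro eq_vecI) auto

lemma plane_rows: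
  "row (1\<^sub>m 6 :: 'a::field mat) 5 = f 1" "row (1\<^sub>m 6 :: 'a::field mat) 4 = f 2"
  "row (tau1 :: 'a::field mat) 5 = f 3" "row (tau1 :: 'a::field mat) 4 = f 2"
  "row (tau2 :: 'a::field mat) 5 = f 1 + f 3" "row (tau2 :: 'a::field mat) 4 = f 2"
  "row (tau_op :: 'a::field mat) 5 = e 2 + f 1" "row (tau_op :: 'a::field mat) 4 = e 1 + f 2"
  by (rule vec_6_eqI, simp add: tau_defs f_def e_def, simp add: f_def e_def, drule less_6_cases,
      elim disjE; simp add: tau_defs f_def e_def)+

lemma plane_of_representatives:
  "plane_of (1\<^sub>m 6 :: 'a::field mat) = span2 (f 1) (f 2)"
  "plane_of (tau1 :: 'a::field mat) = span2 (f 2) (f 3)"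
  "plane_of (tau2 :: 'a::field mat) = span2 (f 1 + f 3) (f 2)"
  "plane_of (tau_op :: 'a::field mat) = span2 (e 2 + f 1) (e 1 + f 2)"
  using plane_of_eq_span_rows[of "1\<^sub>m 6 :: 'a mat"] plane_of_eq_span_rows[of "tau1 :: 'a mat"]
    plane_of_eq_span_rows[of "tau2 :: 'a mat"] plane_of_eq_span_rows[of "tau_op :: 'a mat"]
    span2_swap[of "f 3 :: 'a vec" 6 "f 2"]
  by (simp_all add: plane_rows f_def)

lemma stab_cond_one:
  assumes "block_diag X"
  shows "lower_left_4x2_zero X \<longleftrightarrow> X$$(5,0) = 0 \<and> X$$(2,1) = 0 \<and> X$$(3,1) = 0 \<and> X$$(4,1) = 0"
  using assms by (auto simp: lower_left_4x2_zero_iff block_diag_zero)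

lemma stab_cond_tau1:
  assumes "X \<in> carrier_mat 6 6" "block_diag X"
  shows "lower_left_4x2_zero (tau1 * X * tau1) \<longleftrightarrow>
    X$$(3,1) = 0 \<and> X$$(4,1) = 0 \<and> X$$(3,2) = 0 \<and> X$$(4,2) = 0"
  using assms by (auto simp: lower_left_4x2_zero_iff block_diag_zero mult_mat_6_entry tau_defs)

lemma stab_cond_tau2:
  assumes "X \<in> carrier_mat 6 6" "block_diag X"
  shows "lower_left_4x2_zero (tau2 * X * tau2_inv) \<longleftrightarrow>
    X$$(2,2) = X$$(0,0) \<and> X$$(3,2) = 0 \<and> X$$(4,2) = 0 \<and> X$$(5,0) = 0 \<and>
    X$$(2,1) = 0 \<and> X$$(3,1) = 0 \<and> X$$(4,1) = 0"
  using assms by (auto simp: lower_left_4x2_zero_iff block_diag_zero mult_mat_6_entry tau_defs)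

lemma stab_cond_tau_op:
  assumes "X \<in> carrier_mat 6 6" "block_diag X"
  shows "lower_left_4x2_zero (tau_op * X * tau_op_inv) \<longleftrightarrow>
    X$$(2,4) = 0 \<and> X$$(3,4) = 0 \<and> X$$(4,4) = X$$(0,0) \<and> X$$(1,4) = X$$(5,0) \<and>
    X$$(2,1) = 0 \<and> X$$(3,1) = 0 \<and> X$$(4,1) = X$$(0,5) \<and> X$$(1,1) = X$$(5,5)"
  using assms by (auto simp: lower_left_4x2_zero_iff block_diag_zero mult_mat_6_entry tau_defs)

lemma stab_eq_conditions:
  assumes g: "g \<in> GSp 3" and X: "X \<in> GSp 3" and gX: "g * X = 1\<^sub>m 6" and Xg: "X * g = 1\<^sub>m 6"
    and cond: "\<And>h. h \<in> carrier_mat 6 6 \<Longrightarrow> block_diag h \<Longrightarrow> lower_left_4x2_zero (g * h * X) \<longleftrightarrow> Q h"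
  shows "stab g = {h \<in> Hgrp. Q h}"
  using stab_conj_char[OF g X gX Xg] cond Hgrp_carrier by (auto simp: Hgrp_char)

lemma Hgrp_blocks:
  assumes "h \<in> Hgrp"
  shows "h = iota (outer_block h) (inner_block h)" "(outer_block h, inner_block h) \<in> fiber_prod GL2 (GSp 2)"
proof -
  obtain h1 h2 where h: "h = iota h1 h2" and hp: "(h1, h2) \<in> fiber_prod GL2 (GSp 2)"
    using assms by (auto simp: Hgrp_def)
  have "h1 \<in> carrier_mat 2 2" "h2 \<in> carrier_mat 4 4"
    using hp GSp2_carrier by (auto simp: fiber_prod_def GL2_def)
  hence "outer_block h = h1" "inner_block h = h2"
    using h outer_block_iota inner_block_iota by auto
  thus "h = iota (outer_block h) (inner_block h)" "(outer_block h, inner_block h) \<in> fiber_prod GL2 (GSp 2)"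
    using h hp by auto
qed

lemma Hgrp_filter_eq_image_iota:
  assumes S: "S \<subseteq> fiber_prod GL2 (GSp 2)"
    and Q: "\<And>h. h \<in> Hgrp \<Longrightarrow> Q h \<longleftrightarrow> (outer_block h, inner_block h) \<in> S"
  shows "{h \<in> Hgrp. Q h} = (\<lambda>(h1, h2). iota h1 h2) ` S"
proof (rule Set.set_eqI, rule iffI)
  fix h assume "h \<in> {h \<in> Hgrp. Q h}"
  hence h: "h \<in> Hgrp" and "(outer_block h, inner_block h) \<in> S" using Q by auto
  thus "h \<in> (\<lambda>(h1, h2). iota h1 h2) ` S"
    using Hgrp_blocks(1)[OF h] by (auto intro!: image_eqI[of _ _ "(outer_block h, inner_block h)"])
next
  fix h assume "h \<in> (\<lambda>(h1, h2). iota h1 h2) ` S"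
  then obtain h1 h2 where h: "h = iota h1 h2" and hs: "(h1, h2) \<in> S" by auto
  have hp: "(h1, h2) \<in> fiber_prod GL2 (GSp 2)" using hs S by auto
  hence "h \<in> Hgrp" using h unfolding Hgrp_def by force
  moreover have "h1 \<in> carrier_mat 2 2" "h2 \<in> carrier_mat 4 4"
    using hp GSp2_carrier by (auto simp: fiber_prod_def GL2_def)
  hence "(outer_block h, inner_block h) \<in> S"
    using hs h by (simp add: outer_block_iota inner_block_iota)
  ultimately show "h \<in> {h \<in> Hgrp. Q h}" using Q by simp
qed

lemma GL2_parabolic_iff: "g \<in> GL2 \<Longrightarrow> g \<in> parabolic 1 1 \<longleftrightarrow> g$$(1,0) = 0"
  using parabolic_char[of 1 1] GSp1_eq_GL2 by (auto dest!: less_2_cases)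

lemma GSp2_Klingen_iff:
  "g \<in> GSp 2 \<Longrightarrow> g \<in> parabolic 2 1 \<longleftrightarrow> g$$(1,0) = 0 \<and> g$$(2,0) = 0 \<and> g$$(3,0) = 0"
  using parabolic_char[of 1 2] by (auto dest!: less_4_cases)

lemma GSp2_Siegel_iff:
  "g \<in> GSp 2 \<Longrightarrow> g \<in> parabolic 2 2 \<longleftrightarrow> g$$(2,0) = 0 \<and> g$$(3,0) = 0 \<and> g$$(2,1) = 0 \<and> g$$(3,1) = 0"
  using parabolic_char[of 2 2] by (auto dest!: less_4_cases less_2_cases)

lemma stab_one:
  "stab (1\<^sub>m 6 :: 'a::field mat) = (\<lambda>(h1, h2). iota h1 h2) ` fiber_prod (parabolic 1 1) (parabolic 2 1)"
proof -
  have "stab (1\<^sub>m 6 :: 'a mat) = {h \<in> Hgrp. h$$(5,0) = 0 \<and> h$$(2,1) = 0 \<and> h$$(3,1) = 0 \<and> h$$(4,1) = 0}"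
    by (rule stab_eq_conditions[OF one_GSp3 one_GSp3]) (simp_all add: stab_cond_one)
  also have "\<dots> = (\<lambda>(h1, h2). iota h1 h2) ` fiber_prod (parabolic 1 1) (parabolic 2 1)"
  proof (rule Hgrp_filter_eq_image_iota)
    show "fiber_prod (parabolic 1 1) (parabolic 2 1) \<subseteq> fiber_prod GL2 (GSp 2 :: 'a mat set)"
      unfolding fiber_prod_def parabolic_def using GSp1_eq_GL2 by auto
    fix h :: "'a mat" assume h: "h \<in> Hgrp"
    show "(h$$(5,0) = 0 \<and> h$$(2,1) = 0 \<and> h$$(3,1) = 0 \<and> h$$(4,1) = 0) \<longleftrightarrow>
      (outer_block h, inner_block h) \<in> fiber_prod (parabolic 1 1) (parabolic 2 1)"
      using Hgrp_blocks(2)[OF h] GL2_parabolic_iff[of "outer_block h"] GSp2_Klingen_iff[of "inner_block h"]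
      by (auto simp: fiber_prod_def outer_block_entry inner_block_entry)
  qed
  finally show ?thesis .
qed

lemma stab_tau1:
  "stab (tau1 :: 'a::field mat) = (\<lambda>(h1, h2). iota h1 h2) ` fiber_prod GL2 (parabolic 2 2)"
proof -
  have "stab (tau1 :: 'a mat) = {h \<in> Hgrp. h$$(3,1) = 0 \<and> h$$(4,1) = 0 \<and> h$$(3,2) = 0 \<and> h$$(4,2) = 0}"
    by (rule stab_eq_conditions[OF tau_GSp3(1) tau_GSp3(1) tau_mult_inv(1) tau_mult_inv(1)],
        rule stab_cond_tau1)
  also have "\<dots> = (\<lambda>(h1, h2). iota h1 h2) ` fiber_prod GL2 (parabolic 2 2)"
  proof (rule Hgrp_filter_eq_image_iota)
    show "fiber_prod GL2 (parabolic 2 2) \<subseteq> fiber_prod GL2 (GSp 2 :: 'a mat set)"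
      unfolding fiber_prod_def parabolic_def by auto
    fix h :: "'a mat" assume h: "h \<in> Hgrp"
    show "(h$$(3,1) = 0 \<and> h$$(4,1) = 0 \<and> h$$(3,2) = 0 \<and> h$$(4,2) = 0) \<longleftrightarrow>
      (outer_block h, inner_block h) \<in> fiber_prod GL2 (parabolic 2 2)"
      using Hgrp_blocks(2)[OF h] GSp2_Siegel_iff[of "inner_block h"]
      by (auto simp: fiber_prod_def inner_block_entry)
  qed
  finally show ?thesis .
qed

lemma diag4_carrier [simp]: "diag4 a b c d \<in> carrier_mat 4 4"
  by (simp add: diag4_def mat_of_rows_list_def)

lemma mat2_carrier [simp]: "mat2 a b c d \<in> carrier_mat 2 2"
  by (simp add: mat2_def mat_of_rows_list_def)

lemma mat2_dims [simp]: "dim_row (mat2 a b c d) = 2" "dim_col (mat2 a b c d) = 2"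
  by (simp_all add: mat2_def mat_of_rows_list_def)

lemma mat2_entry:
  "mat2 a b c d $$ (0,0) = a" "mat2 a b c d $$ (0,1) = b"
  "mat2 a b c d $$ (1,0) = c" "mat2 a b c d $$ (1,1) = d"
  by (simp_all add: mat2_def mat_of_rows_list_def)

lemma diag4_mult_entry:
  assumes "u \<in> carrier_mat 4 4" "i < 4" "j < 4"
  shows "(diag4 a b c d * u) $$ (i,j) = (if i = 0 then a else if i = 1 then b else if i = 2 then c else d) * u $$ (i,j)"
  using less_4_cases[OF assms(2)] assms by (elim disjE; simp add: mult_mat_4_entry diag4_def mat_of_rows_list_def)

lemma sform_diag4_mult:
  assumes u: "u \<in> carrier_mat 4 4" and bc: "b * c = a * d" and ij: "i < 4" "j < 4"
  shows "sform 2 (\<lambda>k. (diag4 a b c d * u) $$ (k,i)) (\<lambda>k. (diag4 a b c d * u) $$ (k,j))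
       = (a * d) * sform 2 (\<lambda>k. u $$ (k,i)) (\<lambda>k. u $$ (k,j))"
proof -
  have "sform 2 (\<lambda>k. (diag4 a b c d * u) $$ (k,i)) (\<lambda>k. (diag4 a b c d * u) $$ (k,j))
      = (a * d) * (u$$(0,i) * u$$(3,j) - u$$(3,i) * u$$(0,j)) + (b * c) * (u$$(1,i) * u$$(2,j) - u$$(2,i) * u$$(1,j))"
    using u ij by (simp add: sform_expand diag4_mult_entry algebra_simps)
  thus ?thesis by (simp add: bc sform_expand algebra_simps)
qed

lemma U_GSp4_entry:
  "u \<in> U_GSp4 \<Longrightarrow> i < 4 \<Longrightarrow> j < 4 \<Longrightarrow> (j < i \<longrightarrow> u $$ (i,j) = 0) \<and> (i = j \<longrightarrow> u $$ (i,j) = 1)"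
  by (simp add: U_GSp4_def)

lemma U_GSp4_sim:
  assumes u: "u \<in> U_GSp4"
  shows "sim 2 u = 1"
proof -
  have "u$$(0,0) = 1" "u$$(3,3) = 1" "u$$(1,0) = 0" "u$$(2,0) = 0" "u$$(3,0) = 0"
    using U_GSp4_entry[OF u, of 0 0] U_GSp4_entry[OF u, of 3 3] U_GSp4_entry[OF u, of 1 0]
      U_GSp4_entry[OF u, of 2 0] U_GSp4_entry[OF u, of 3 0] by simp_all
  thus ?thesis using GSp2_gram[of u 0 3] u by (simp add: U_GSp4_def sform_expand Jmat_entry)
qed

lemma diag4_mult_U_GSp4:
  assumes u: "u \<in> U_GSp4" and nz: "\<alpha> \<noteq> 0" "\<delta> \<noteq> 0" and ad: "a * d = \<alpha> * \<delta>"
  shows "diag4 \<alpha> a d \<delta> * u \<in> GSp 2" "sim 2 (diag4 \<alpha> a d \<delta> * u) = \<alpha> * \<delta>"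
proof -
  have uG: "u \<in> GSp 2" using u by (simp add: U_GSp4_def)
  have "sform 2 (\<lambda>k. (diag4 \<alpha> a d \<delta> * u) $$ (k,i)) (\<lambda>k. (diag4 \<alpha> a d \<delta> * u) $$ (k,j))
      = (\<alpha> * \<delta>) * Jmat 2 $$ (i,j)" if "i < 2*2" "j < 2*2" for i j
    using that sform_diag4_mult[OF GSp2_carrier[OF uG] ad] GSp2_gram[OF uG] U_GSp4_sim[OF u] by simp
  thus "diag4 \<alpha> a d \<delta> * u \<in> GSp 2" "sim 2 (diag4 \<alpha> a d \<delta> * u) = \<alpha> * \<delta>"
    using GSp_by_gram[of "diag4 \<alpha> a d \<delta> * u" 2 "\<alpha> * \<delta>"] nz
      mult_carrier_mat[OF diag4_carrier GSp2_carrier[OF uG]] by auto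
qed

lemma GSp2_upper_triangular_decomp:
  assumes h: "h \<in> GSp 2" and upper: "\<And>i j. j < i \<Longrightarrow> i < 4 \<Longrightarrow> h $$ (i,j) = 0"
  shows "h$$(0,0) * h$$(3,3) = sim 2 h" "h$$(1,1) * h$$(2,2) = sim 2 h"
    "\<exists>u \<in> U_GSp4. h = diag4 (h$$(0,0)) (h$$(1,1)) (h$$(2,2)) (h$$(3,3)) * u"
proof -
  define m where "m = sim 2 h"
  have m: "m \<noteq> 0" using GSp_sim(1)[OF h] by (simp add: m_def)
  have "h$$(1,0) = 0" "h$$(2,0) = 0" "h$$(3,0) = 0" "h$$(2,1) = 0" "h$$(3,1) = 0" "h$$(3,2) = 0"
    by (simp_all add: upper)
  thus d03: "h$$(0,0) * h$$(3,3) = sim 2 h" and d12: "h$$(1,1) * h$$(2,2) = sim 2 h"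
    using GSp2_gram[OF h, of 0 3] GSp2_gram[OF h, of 1 2] by (simp_all add: sform_expand Jmat_entry)
  define dg where "dg i = (if i = 0 then h$$(0,0) else if i = 1 then h$$(1,1) else if i = 2 then h$$(2,2) else h$$(3,3))"
    for i :: nat
  have dg: "dg i \<noteq> 0" for i using d03 d12 m by (auto simp: dg_def m_def)
  define u where "u = mat 4 4 (\<lambda>(i,j). h$$(i,j) / dg i)"
  have uc: "u \<in> carrier_mat 4 4" by (simp add: u_def)
  have hu: "h = diag4 (h$$(0,0)) (h$$(1,1)) (h$$(2,2)) (h$$(3,3)) * u"
  proof (rule eq_matI)
    fix i j assume "i < dim_row (diag4 (h$$(0,0)) (h$$(1,1)) (h$$(2,2)) (h$$(3,3)) * u)"
      "j < dim_col (diag4 (h$$(0,0)) (h$$(1,1)) (h$$(2,2)) (h$$(3,3)) * u)"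
    hence ij: "i < 4" "j < 4" using uc by (simp_all add: diag4_def mat_of_rows_list_def)
    show "h $$ (i,j) = (diag4 (h$$(0,0)) (h$$(1,1)) (h$$(2,2)) (h$$(3,3)) * u) $$ (i,j)"
      using diag4_mult_entry[OF uc ij] dg[of i] ij by (simp add: u_def dg_def)
  qed (use GSp2_carrier[OF h] uc in \<open>simp_all add: diag4_def mat_of_rows_list_def\<close>)
  have "sform 2 (\<lambda>k. u $$ (k,i)) (\<lambda>k. u $$ (k,j)) = 1 * Jmat 2 $$ (i,j)" if "i < 2*2" "j < 2*2" for i j
    using that GSp2_gram[OF h] sform_diag4_mult[OF uc d12[folded d03], of i j, folded hu] d03 m
    by (simp add: m_def)
  hence uG: "u \<in> GSp 2" using GSp_by_gram(1)[of u 2 1] uc by simp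
  have "u \<in> U_GSp4" unfolding U_GSp4_def
    using uG upper dg by (auto simp: u_def dg_def dest!: less_4_cases)
  thus "\<exists>u \<in> U_GSp4. h = diag4 (h$$(0,0)) (h$$(1,1)) (h$$(2,2)) (h$$(3,3)) * u" using hu by blast
qed

definition stab3_cond :: "'a::field mat \<Rightarrow> 'a mat \<Rightarrow> bool" where
  "stab3_cond h1 h2 \<longleftrightarrow> h1$$(1,0) = 0 \<and> h2$$(1,1) = h1$$(0,0) \<and>
     h2$$(1,0) = 0 \<and> h2$$(2,0) = 0 \<and> h2$$(3,0) = 0 \<and> h2$$(2,1) = 0 \<and> h2$$(3,1) = 0"

lemma stab3_setD:
  assumes "(h1, h2) \<in> stab3_set"
  shows "(h1, h2) \<in> fiber_prod GL2 (GSp 2)" "stab3_cond h1 h2"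
proof -
  obtain a b d \<alpha> \<delta> u where h1: "h1 = mat2 a b 0 d * 1\<^sub>m 2" and h2: "h2 = diag4 \<alpha> a d \<delta> * u"
    and nz: "a \<noteq> 0" "d \<noteq> 0" "\<alpha> \<noteq> 0" "\<delta> \<noteq> 0" and ad: "a * d = \<alpha> * \<delta>" and u: "u \<in> U_GSp4"
    using assms unfolding stab3_set_def by blast
  note h1 = h1[unfolded right_mult_one_mat[OF mat2_carrier]]
  have uc: "u \<in> carrier_mat 4 4" using u GSp2_carrier by (auto simp: U_GSp4_def)
  have "det h1 = a * d" using det_2x2[of h1] h1 by (simp add: mat2_entry)
  thus "(h1, h2) \<in> fiber_prod GL2 (GSp 2)"
    using diag4_mult_U_GSp4[OF u nz(3,4) ad] h1 h2 nz ad by (simp add: fiber_prod_def GL2_def)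
  have "u$$(1,1) = 1" "u$$(1,0) = 0" "u$$(2,0) = 0" "u$$(3,0) = 0" "u$$(2,1) = 0" "u$$(3,1) = 0"
    using U_GSp4_entry[OF u, of 1 1] U_GSp4_entry[OF u, of 1 0] U_GSp4_entry[OF u, of 2 0]
      U_GSp4_entry[OF u, of 3 0] U_GSp4_entry[OF u, of 2 1] U_GSp4_entry[OF u, of 3 1] by simp_all
  thus "stab3_cond h1 h2"
    using h1 h2 by (simp add: stab3_cond_def mat2_entry diag4_mult_entry[OF uc])
qed

lemma stab3_setI:
  assumes fp: "(h1, h2) \<in> fiber_prod GL2 (GSp 2)" and Q: "stab3_cond h1 h2"
  shows "(h1, h2) \<in> stab3_set"
proof -
  have h1: "h1 \<in> GL2" and h2: "h2 \<in> GSp 2" and dt: "det h1 = sim 2 h2"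
    using fp by (auto simp: fiber_prod_def)
  note q = Q[unfolded stab3_cond_def]
  have c1: "h1 \<in> carrier_mat 2 2" using h1 by (simp add: GL2_def)
  have m: "sim 2 h2 \<noteq> 0" using GSp_sim(1)[OF h2] by simp
  have "h2$$(0,0) * h2$$(3,2) = 0" "h2$$(0,0) * h2$$(3,3) = sim 2 h2"
    using GSp2_gram[OF h2, of 0 2] GSp2_gram[OF h2, of 0 3] q by (simp_all add: sform_expand Jmat_entry)
  hence "h2$$(3,2) = 0" using m by auto
  hence upper: "h2 $$ (i,j) = 0" if "j < i" "i < 4" for i j
    using that q less_4_cases[of i] less_4_cases[of j] by auto
  note T = GSp2_upper_triangular_decomp[OF h2 upper]
  have "det h1 = h1$$(0,0) * h1$$(1,1)" using det_2x2[OF c1] q by simp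
  hence d22: "h2$$(2,2) = h1$$(1,1)" using T(2) q dt m by (auto simp: mult_left_cancel)
  have "h1 = mat2 (h1$$(0,0)) (h1$$(0,1)) 0 (h1$$(1,1))"
    using c1 q by (auto simp: mat2_entry intro!: eq_matI dest!: less_2_cases)
  hence "h1 = mat2 (h1$$(0,0)) (h1$$(0,1)) 0 (h1$$(1,1)) * 1\<^sub>m 2"
    by (subst right_mult_one_mat[OF mat2_carrier])
  thus ?thesis unfolding stab3_set_def using T q d22 dt m by fastforce
qed

lemma stab_tau2: "stab (tau2 :: 'a::field mat) = (\<lambda>(h1, h2). iota h1 h2) ` stab3_set"
proof -
  have "stab (tau2 :: 'a mat) = {h \<in> Hgrp. h$$(2,2) = h$$(0,0) \<and> h$$(3,2) = 0 \<and> h$$(4,2) = 0 \<and>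
      h$$(5,0) = 0 \<and> h$$(2,1) = 0 \<and> h$$(3,1) = 0 \<and> h$$(4,1) = 0}"
    by (rule stab_eq_conditions[OF tau_GSp3(2) tau_GSp3(4) tau_mult_inv(2,3)], rule stab_cond_tau2)
  also have "\<dots> = (\<lambda>(h1, h2). iota h1 h2) ` stab3_set"
  proof (rule Hgrp_filter_eq_image_iota)
    show "stab3_set \<subseteq> fiber_prod GL2 (GSp 2 :: 'a mat set)"
      using stab3_setD(1) by auto
    fix h :: "'a mat" assume h: "h \<in> Hgrp"
    have "(h$$(2,2) = h$$(0,0) \<and> h$$(3,2) = 0 \<and> h$$(4,2) = 0 \<and> h$$(5,0) = 0 \<and>
        h$$(2,1) = 0 \<and> h$$(3,1) = 0 \<and> h$$(4,1) = 0) \<longleftrightarrow> stab3_cond (outer_block h) (inner_block h)"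
      by (auto simp: stab3_cond_def outer_block_entry inner_block_entry)
    also have "\<dots> \<longleftrightarrow> (outer_block h, inner_block h) \<in> stab3_set"
      using Hgrp_blocks(2)[OF h] stab3_setD(2) stab3_setI by blast
    finally show "(h$$(2,2) = h$$(0,0) \<and> h$$(3,2) = 0 \<and> h$$(4,2) = 0 \<and> h$$(5,0) = 0 \<and>
        h$$(2,1) = 0 \<and> h$$(3,1) = 0 \<and> h$$(4,1) = 0) \<longleftrightarrow> (outer_block h, inner_block h) \<in> stab3_set" .
  qed
  finally show ?thesis .
qed

lemma jmap_carrier [simp]: "jmap h1 h2 \<in> carrier_mat 4 4"
  by (simp add: jmap_def)

lemma jmap_entry:
  "jmap h1 k $$ (0,0) = h1$$(1,1)" "jmap h1 k $$ (0,3) = h1$$(1,0)"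
  "jmap h1 k $$ (3,0) = h1$$(0,1)" "jmap h1 k $$ (3,3) = h1$$(0,0)"
  "jmap h1 k $$ (1,1) = k$$(0,0)" "jmap h1 k $$ (1,2) = k$$(0,1)"
  "jmap h1 k $$ (2,1) = k$$(1,0)" "jmap h1 k $$ (2,2) = k$$(1,1)"
  "jmap h1 k $$ (0,1) = 0" "jmap h1 k $$ (0,2) = 0" "jmap h1 k $$ (3,1) = 0" "jmap h1 k $$ (3,2) = 0"
  "jmap h1 k $$ (1,0) = 0" "jmap h1 k $$ (2,0) = 0" "jmap h1 k $$ (1,3) = 0" "jmap h1 k $$ (2,3) = 0"
  by (simp_all add: jmap_def)

definition jmap_outer_cols :: "'a::field mat \<Rightarrow> 'a mat \<Rightarrow> bool" where
  "jmap_outer_cols h1 h2 \<longleftrightarrow>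
     h2$$(0,0) = h1$$(1,1) \<and> h2$$(1,0) = 0 \<and> h2$$(2,0) = 0 \<and> h2$$(3,0) = h1$$(0,1) \<and>
     h2$$(0,3) = h1$$(1,0) \<and> h2$$(1,3) = 0 \<and> h2$$(2,3) = 0 \<and> h2$$(3,3) = h1$$(0,0)"

lemma jmap_in_fiber_prod:
  assumes J: "(h1, k) \<in> Jgrp"
  shows "(h1, jmap h1 k) \<in> fiber_prod GL2 (GSp 2)" "jmap_outer_cols h1 (jmap h1 k)"
proof -
  have h1: "h1 \<in> GL2" and c1: "h1 \<in> carrier_mat 2 2" and ck: "k \<in> carrier_mat 2 2"
    and dk: "det h1 = det k" and nz: "det h1 \<noteq> 0"
    using J by (auto simp: Jgrp_def GL2_def)
  have "sform 2 (\<lambda>l. jmap h1 k $$ (l,i)) (\<lambda>l. jmap h1 k $$ (l,j)) = det h1 * Jmat 2 $$ (i,j)"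
    if "i < 4" "j < 4" for i j
    using less_4_cases[OF that(1)] less_4_cases[OF that(2)]
    by (elim disjE; simp add: sform_expand jmap_entry Jmat_entry;
        ((simp add: algebra_simps det_2x2[OF c1]; fail) | (simp add: algebra_simps dk det_2x2[OF ck]; fail))?)
  hence "jmap h1 k \<in> GSp 2" "sim 2 (jmap h1 k) = det h1"
    using GSp_by_gram[of "jmap h1 k" 2 "det h1"] nz by auto
  thus "(h1, jmap h1 k) \<in> fiber_prod GL2 (GSp 2)" using h1 by (simp add: fiber_prod_def)
  show "jmap_outer_cols h1 (jmap h1 k)" by (simp add: jmap_outer_cols_def jmap_entry)
qed

lemma eq_jmap_if_outer_cols:
  assumes h1: "h1 \<in> GL2" and h2: "h2 \<in> GSp 2" and dt: "det h1 = sim 2 h2"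
    and Q: "jmap_outer_cols h1 h2"
  shows "\<exists>k. (h1, k) \<in> Jgrp \<and> h2 = jmap h1 k"
proof -
  have c1: "h1 \<in> carrier_mat 2 2" using h1 by (simp add: GL2_def)
  note q = Q[unfolded jmap_outer_cols_def]
  have "h1$$(1,1) * (- h1$$(0,0)) - (- h1$$(0,1)) * h1$$(1,0) = - det h1"
    using det_2x2[OF c1] by (simp add: algebra_simps)
  hence D: "h1$$(1,1) * (- h1$$(0,0)) - (- h1$$(0,1)) * h1$$(1,0) \<noteq> 0"
    using h1 by (simp add: GL2_def)
  have z: "h2$$(3,j) = 0" "h2$$(0,j) = 0" if "j = 1 \<or> j = 2" for j
  proof -
    have "h1$$(1,1) * h2$$(3,j) + (- h1$$(0,1)) * h2$$(0,j) = 0"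
      "h1$$(1,0) * h2$$(3,j) + (- h1$$(0,0)) * h2$$(0,j) = 0"
      using GSp2_gram[OF h2, of 0 j] GSp2_gram[OF h2, of 3 j] that q
      by (auto simp: sform_expand Jmat_entry)
    thus "h2$$(3,j) = 0" "h2$$(0,j) = 0" using linear_2x2_unique_zero[OF _ _ D] by blast+
  qed
  define k where "k = mat 2 2 (\<lambda>(i,j). h2$$(i+1, j+1))"
  have kc: "k \<in> carrier_mat 2 2" by (simp add: k_def)
  have "det k = sim 2 h2"
    using GSp2_gram[OF h2, of 1 2] z[of 1] z[of 2] det_2x2[OF kc]
    by (simp add: k_def sform_expand Jmat_entry algebra_simps)
  hence "(h1, k) \<in> Jgrp" using h1 kc dt by (simp add: Jgrp_def GL2_def)
  moreover have "h2 = jmap h1 k"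
  proof (rule eq_matI)
    fix i j assume "i < dim_row (jmap h1 k)" "j < dim_col (jmap h1 k)"
    hence "i < 4" "j < 4" by (simp_all add: jmap_def)
    thus "h2 $$ (i,j) = jmap h1 k $$ (i,j)"
      using q z[of 1] z[of 2] less_4_cases[of i] less_4_cases[of j]
      by (auto simp: jmap_entry k_def)
  qed (use GSp2_carrier[OF h2] in \<open>simp_all add: jmap_def\<close>)
  ultimately show ?thesis by blast
qed

lemma stab_tau_op: "stab (tau_op :: 'a::field mat) = (\<lambda>(h1, h2). iota h1 (jmap h1 h2)) ` Jgrp"
proof -
  define S :: "('a mat \<times> 'a mat) set" where "S = (\<lambda>(h1, h2). (h1, jmap h1 h2)) ` Jgrp"
  have "stab (tau_op :: 'a mat) = {h \<in> Hgrp. h$$(2,4) = 0 \<and> h$$(3,4) = 0 \<and> h$$(4,4) = h$$(0,0) \<and>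
      h$$(1,4) = h$$(5,0) \<and> h$$(2,1) = 0 \<and> h$$(3,1) = 0 \<and> h$$(4,1) = h$$(0,5) \<and> h$$(1,1) = h$$(5,5)}"
    by (rule stab_eq_conditions[OF tau_GSp3(3) tau_GSp3(5) tau_mult_inv(4,5)], rule stab_cond_tau_op)
  also have "\<dots> = (\<lambda>(h1, h2). iota h1 h2) ` S"
  proof (rule Hgrp_filter_eq_image_iota)
    show "S \<subseteq> fiber_prod GL2 (GSp 2)" unfolding S_def using jmap_in_fiber_prod(1) by auto
    fix h :: "'a mat" assume h: "h \<in> Hgrp"
    have blocks: "outer_block h \<in> GL2" "inner_block h \<in> GSp 2" "det (outer_block h) = sim 2 (inner_block h)"
      using Hgrp_blocks(2)[OF h] by (auto simp: fiber_prod_def)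
    have "(h$$(2,4) = 0 \<and> h$$(3,4) = 0 \<and> h$$(4,4) = h$$(0,0) \<and> h$$(1,4) = h$$(5,0) \<and>
        h$$(2,1) = 0 \<and> h$$(3,1) = 0 \<and> h$$(4,1) = h$$(0,5) \<and> h$$(1,1) = h$$(5,5))
      \<longleftrightarrow> jmap_outer_cols (outer_block h) (inner_block h)"
      by (auto simp: jmap_outer_cols_def outer_block_entry inner_block_entry)
    also have "\<dots> \<longleftrightarrow> (outer_block h, inner_block h) \<in> S"
      using eq_jmap_if_outer_cols[OF blocks] jmap_in_fiber_prod(2) unfolding S_def by force
    finally show "(h$$(2,4) = 0 \<and> h$$(3,4) = 0 \<and> h$$(4,4) = h$$(0,0) \<and> h$$(1,4) = h$$(5,0) \<and>
        h$$(2,1) = 0 \<and> h$$(3,1) = 0 \<and> h$$(4,1) = h$$(0,5) \<and> h$$(1,1) = h$$(5,5))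
      \<longleftrightarrow> (outer_block h, inner_block h) \<in> S" .
  qed
  also have "\<dots> = (\<lambda>(h1, h2). iota h1 (jmap h1 h2)) ` Jgrp"
    unfolding S_def by (auto simp: image_iff)
  finally show ?thesis .
qed

section \<open>Every double coset contains a representative\<close>

(* Row vectors in M = <e2,e3,f3,f2> and in O = <e1,f1>; the form pairs O with O and M with M. *)
definition in_inner :: "(nat \<Rightarrow> 'a::zero) \<Rightarrow> bool" where
  "in_inner x \<longleftrightarrow> x 0 = 0 \<and> x 5 = 0"

definition in_outer :: "(nat \<Rightarrow> 'a::zero) \<Rightarrow> bool" where
  "in_outer x \<longleftrightarrow> x 1 = 0 \<and> x 2 = 0 \<and> x 3 = 0 \<and> x 4 = 0"

definition coord :: "nat \<Rightarrow> 'a \<Rightarrow> nat \<Rightarrow> 'a::zero" where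
  "coord j c = (\<lambda>k. if k = j then c else 0)"

lemma sform_outer_inner: "in_outer x \<Longrightarrow> in_inner y \<Longrightarrow> sform 3 x y = 0"
  by (simp add: sform_expand in_outer_def in_inner_def)

lemma sform_inner_outer: "in_inner x \<Longrightarrow> in_outer y \<Longrightarrow> sform 3 x y = 0"
  by (simp add: sform_expand in_outer_def in_inner_def)

lemma in_inner_lin_comb: "in_inner x \<Longrightarrow> in_inner y \<Longrightarrow> in_inner (lin_comb a x b y)"
  by (simp add: in_inner_def lin_comb_def)

lemma in_inner_coord: "1 \<le> j \<Longrightarrow> j \<le> 4 \<Longrightarrow> in_inner (coord j c)"
  by (simp add: in_inner_def coord_def)

definition pair_sign :: "nat \<Rightarrow> 'a::comm_ring_1" where
  "pair_sign j = (if j < 3 then 1 else -1)"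

lemma pair_sign_sq: "pair_sign j * pair_sign j = (1::'a::comm_ring_1)"
  by (simp add: pair_sign_def)

lemma sform_coord: "j < 6 \<Longrightarrow> sform 3 (coord j c) y = c * pair_sign j * y (5 - j)"
  by (drule less_6_cases, elim disjE; simp add: sform_expand coord_def pair_sign_def)

(* Projection onto the orthogonal complement of <u,w>, for u, w with sform 3 u w = m. *)
definition sp_proj :: "'a \<Rightarrow> (nat \<Rightarrow> 'a) \<Rightarrow> (nat \<Rightarrow> 'a) \<Rightarrow> (nat \<Rightarrow> 'a) \<Rightarrow> nat \<Rightarrow> 'a::field" where
  "sp_proj m u w x = lin_comb 1 x 1 (lin_comb (- sform 3 x w / m) u (sform 3 x u / m) w)"

context
  fixes m :: "'a::field" and u w :: "nat \<Rightarrow> 'a"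
  assumes uw: "sform 3 u w = m" and m: "m \<noteq> 0"
begin

lemma sform_sp_proj_left: "sform 3 (sp_proj m u w x) z
    = sform 3 x z - sform 3 x w / m * sform 3 u z + sform 3 x u / m * sform 3 w z"
  by (simp add: sp_proj_def sform_lin_comb_left)

lemma sp_proj_orth: "sform 3 (sp_proj m u w x) u = 0" "sform 3 (sp_proj m u w x) w = 0"
  using uw m sform_skew[of 3 w u] by (simp_all add: sform_sp_proj_left sform_self)

lemma sform_sp_proj_sp_proj: "sform 3 (sp_proj m u w x) (sp_proj m u w y) = sform 3 x (sp_proj m u w y)"
  using sp_proj_orth[of y] sform_skew[of 3 u "sp_proj m u w y"] sform_skew[of 3 w "sp_proj m u w y"]
  by (simp add: sform_sp_proj_left)

lemma in_inner_sp_proj: "in_inner u \<Longrightarrow> in_inner w \<Longrightarrow> in_inner x \<Longrightarrow> in_inner (sp_proj m u w x)"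
  by (simp add: sp_proj_def in_inner_lin_comb)

end

(* The projections of the hyperbolic pairs (e2,f2) and (e3,f3) of M have pairings c1, c2 with
   c1 + c2 = 1, so one of them is again a hyperbolic pair. *)
lemma inner_symplectic_complement:
  fixes u w :: "nat \<Rightarrow> 'a::field"
  assumes u: "in_inner u" and w: "in_inner w" and uw: "sform 3 u w = m" and m: "m \<noteq> 0"
  shows "\<exists>v1 v2. in_inner v1 \<and> in_inner v2 \<and> sform 3 v1 v2 = m \<and>
    sform 3 v1 u = 0 \<and> sform 3 v1 w = 0 \<and> sform 3 v2 u = 0 \<and> sform 3 v2 w = 0"
proof -
  let ?P = "sp_proj m u w"
  have PP: "sform 3 (?P x) (?P y) = sform 3 x (?P y)" for x y
    using sform_sp_proj_sp_proj[OF uw m] .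
  define c1 where "c1 = sform 3 (?P (coord 1 1)) (?P (coord 4 1))"
  define c2 where "c2 = sform 3 (?P (coord 2 1)) (?P (coord 3 1))"
  have "c1 * m = m + (w 1 * u 4 - u 1 * w 4)" "c2 * m = m + (w 2 * u 3 - u 2 * w 3)"
    unfolding c1_def c2_def PP using m
    by (simp_all add: sform_expand sp_proj_def lin_comb_def coord_def algebra_simps)
  hence "(c1 + c2) * m = m + m + (w 1 * u 4 - u 1 * w 4 + (w 2 * u 3 - u 2 * w 3))"
    by (simp add: distrib_right)
  also have "w 1 * u 4 - u 1 * w 4 + (w 2 * u 3 - u 2 * w 3) = - m"
    using uw u w by (simp add: sform_expand in_inner_def algebra_simps)
  finally have "(c1 + c2) * m = 1 * m" by simp
  hence "c1 + c2 = 1" using m by (metis mult_right_cancel)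
  then obtain i j where ij: "(i, j) = (1, 4) \<or> (i, j) = (2, 3)"
      and c: "sform 3 (?P (coord i 1)) (?P (coord j 1)) \<noteq> 0"
    unfolding c1_def c2_def by (metis add_0 zero_neq_one)
  define c where "c = sform 3 (?P (coord i 1)) (?P (coord j 1))"
  define v2 where "v2 = (\<lambda>k. (m / c) * ?P (coord j 1) k)"
  have "sform 3 (?P (coord i 1)) v2 = m" using c unfolding v2_def sform_scale_right by (simp add: c_def)
  moreover have "sform 3 v2 u = 0" "sform 3 v2 w = 0"
    using sp_proj_orth[OF uw m] unfolding v2_def sform_scale_left by simp_all
  moreover have Pin: "in_inner (?P (coord k 1))" if "1 \<le> k" "k \<le> 4" for k
    using in_inner_sp_proj[OF uw m u w in_inner_coord[OF that]] .
  hence "in_inner (?P (coord i 1))" "in_inner v2"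
    using ij Pin[of j] by (auto simp: v2_def in_inner_def)
  ultimately show ?thesis using sp_proj_orth[OF uw m] by blast
qed

lemma exists_inner_pairing:
  fixes w :: "nat \<Rightarrow> 'a::field"
  assumes p: "1 \<le> p" "p \<le> 4" and wp: "w p \<noteq> 0"
  shows "\<exists>x. in_inner x \<and> sform 3 x w = t"
proof -
  define x where "x = coord (5 - p) (t * pair_sign (5 - p) / w p)"
  have "sform 3 x w = t * pair_sign (5 - p) / w p * pair_sign (5 - p) * w p"
    unfolding x_def using p by (simp add: sform_coord)
  also have "\<dots> = t * (pair_sign (5 - p) * pair_sign (5 - p))" using wp by (simp add: field_simps)
  finally have "sform 3 x w = t" by (simp add: pair_sign_sq)
  moreover have "in_inner x" unfolding x_def using p by (intro in_inner_coord) auto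
  ultimately show ?thesis by blast
qed

lemma exists_nonzero_minor:
  fixes u w :: "nat \<Rightarrow> 'a::field"
  assumes ind: "\<And>c d. (\<forall>k. 1 \<le> k \<and> k \<le> 4 \<longrightarrow> c * u k + d * w k = 0) \<Longrightarrow> c = 0 \<and> d = 0"
  shows "\<exists>p q. 1 \<le> p \<and> p \<le> 4 \<and> 1 \<le> q \<and> q \<le> 4 \<and> u p * w q - u q * w p \<noteq> 0"
proof (rule ccontr)
  assume "\<not> ?thesis"
  hence Z: "\<And>p q. 1 \<le> p \<Longrightarrow> p \<le> 4 \<Longrightarrow> 1 \<le> q \<Longrightarrow> q \<le> 4 \<Longrightarrow> u p * w q = u q * w p" by auto
  have "\<not> (\<forall>k. 1 \<le> k \<and> k \<le> 4 \<longrightarrow> 1 * u k + 0 * w k = 0)"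
    using ind[of 1 0] by auto
  then obtain p where p: "1 \<le> p" "p \<le> 4" "u p \<noteq> 0" by auto
  have "\<forall>k. 1 \<le> k \<and> k \<le> 4 \<longrightarrow> w p * u k + (- u p) * w k = 0"
  proof (intro allI impI)
    fix k :: nat assume k: "1 \<le> k \<and> k \<le> 4"
    have "u k * w p = u p * w k" using Z[of k p] k p by simp
    thus "w p * u k + (- u p) * w k = 0" by (simp add: algebra_simps)
  qed
  hence "w p = 0 \<and> - u p = 0" by (rule ind)
  thus False using p by simp
qed

lemma exists_inner_dual_pairing:
  fixes u w :: "nat \<Rightarrow> 'a::field"
  assumes ind: "\<And>c d. (\<forall>k. 1 \<le> k \<and> k \<le> 4 \<longrightarrow> c * u k + d * w k = 0) \<Longrightarrow> c = 0 \<and> d = 0"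
  shows "\<exists>x. in_inner x \<and> sform 3 x u = s \<and> sform 3 x w = t"
proof -
  obtain p q where pq: "1 \<le> p" "p \<le> 4" "1 \<le> q" "q \<le> 4" and D: "u p * w q - u q * w p \<noteq> 0"
    using exists_nonzero_minor[OF ind] by blast
  define D where "D = u p * w q - u q * w p"
  define a where "a = (s * w q - t * u q) / D"
  define b where "b = (t * u p - s * w p) / D"
  define x where "x = lin_comb 1 (coord (5 - p) (a * pair_sign (5 - p))) 1 (coord (5 - q) (b * pair_sign (5 - q)))"
  have pq5: "5 - (5 - p) = p" "5 - p < 6" "5 - (5 - q) = q" "5 - q < 6" using pq by auto
  have sg2: "c * pair_sign j * pair_sign j * y = c * (y::'a)" for c j y by (simp add: pair_sign_def)
  have xy: "sform 3 x y = a * y p + b * y q" for y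
    unfolding x_def sform_lin_comb_left sform_coord[OF pq5(2)] sform_coord[OF pq5(4)] pq5(1,3) sg2 by simp
  have "a * u p + b * u q = ((s * w q - t * u q) * u p + (t * u p - s * w p) * u q) / D"
    "a * w p + b * w q = ((s * w q - t * u q) * w p + (t * u p - s * w p) * w q) / D"
    unfolding a_def b_def by (simp_all add: add_divide_distrib)
  moreover have "(s * w q - t * u q) * u p + (t * u p - s * w p) * u q = s * D"
    "(s * w q - t * u q) * w p + (t * u p - s * w p) * w q = t * D"
    by (simp_all add: D_def algebra_simps)
  ultimately have "sform 3 x u = s" "sform 3 x w = t" using D by (simp_all add: xy D_def)
  moreover have "in_inner x" unfolding x_def using pq by (intro in_inner_lin_comb in_inner_coord) auto
  ultimately show ?thesis by blast
qed

definition outer_part :: "(nat \<Rightarrow> 'a::zero) \<Rightarrow> nat \<Rightarrow> 'a" where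
  "outer_part x = (\<lambda>k. if k = 0 \<or> k = 5 then x k else 0)"

definition inner_part :: "(nat \<Rightarrow> 'a::zero) \<Rightarrow> nat \<Rightarrow> 'a" where
  "inner_part x = (\<lambda>k. if k = 0 \<or> k = 5 then 0 else x k)"

lemma in_outer_outer_part [simp]: "in_outer (outer_part x)"
  by (simp add: in_outer_def outer_part_def)

lemma in_inner_inner_part [simp]: "in_inner (inner_part x)"
  by (simp add: in_inner_def inner_part_def)

lemma outer_part_plus_inner_part:
  "outer_part x k + inner_part x k = (x k :: 'a::comm_monoid_add)"
  "inner_part x k + outer_part x k = x k"
  by (simp_all add: outer_part_def inner_part_def)

lemma sform_outer_inner_split: "sform 3 x y = (x 0 * y 5 - x 5 * y 0) + sform 3 (inner_part x) (inner_part y)"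
  by (simp add: sform_expand inner_part_def algebra_simps)

lemma sform_outer_part: "sform 3 (outer_part x) (outer_part y) = x 0 * y 5 - x 5 * y 0"
  by (simp add: sform_expand outer_part_def)

lemma sform_inner_part_left: "in_inner y \<Longrightarrow> sform 3 (inner_part x) y = sform 3 x y"
  by (simp add: sform_expand inner_part_def in_inner_def)

lemma sform_inner_part_right: "in_inner x \<Longrightarrow> sform 3 x (inner_part y) = sform 3 x y"
  by (simp add: sform_expand inner_part_def in_inner_def)

lemma in_outer_coord: "j = 0 \<or> j = 5 \<Longrightarrow> in_outer (coord j c)"
  by (auto simp: in_outer_def coord_def)

lemma exists_outer_pairing:
  fixes z :: "nat \<Rightarrow> 'a::field"
  assumes "z 0 \<noteq> 0 \<or> z 5 \<noteq> 0"
  shows "\<exists>x. in_outer x \<and> sform 3 x (outer_part z) = 1"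
proof (cases "z 5 = 0")
  case False
  hence "sform 3 (coord 0 (1 / z 5)) (outer_part z) = 1" by (simp add: sform_coord pair_sign_def outer_part_def)
  thus ?thesis using in_outer_coord[of 0] by blast
next
  case True
  hence "sform 3 (coord 5 (- 1 / z 0)) (outer_part z) = 1"
    using assms by (simp add: sform_coord pair_sign_def outer_part_def)
  thus ?thesis using in_outer_coord[of 5] by blast
qed

lemma inner_support_of_pairing:
  assumes "in_inner y" "sform 3 x y \<noteq> 0"
  shows "\<exists>p. 1 \<le> p \<and> p \<le> 4 \<and> y p \<noteq> 0"
proof (rule ccontr)
  assume "\<not> ?thesis"
  hence "y 1 = 0" "y 2 = 0" "y 3 = 0" "y 4 = 0" by auto
  thus False using assms by (simp add: sform_expand in_inner_def)
qed

lemma mat_of_rows_in_Hgrp: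
  fixes r :: "nat \<Rightarrow> nat \<Rightarrow> 'a::field"
  assumes m: "m \<noteq> 0"
    and outer: "in_outer (r 0)" "in_outer (r 5)"
    and inner: "in_inner (r 1)" "in_inner (r 2)" "in_inner (r 3)" "in_inner (r 4)"
    and pairs: "sform 3 (r 0) (r 5) = m" "sform 3 (r 1) (r 4) = m" "sform 3 (r 2) (r 3) = m"
    and orth: "sform 3 (r 1) (r 2) = 0" "sform 3 (r 1) (r 3) = 0" "sform 3 (r 2) (r 4) = 0"
      "sform 3 (r 3) (r 4) = 0"
  shows "mat 6 6 (\<lambda>(i,j). r i j) \<in> Hgrp"
proof -
  have upper: "sform 3 (r i) (r j) = m * Jmat 3 $$ (i,j)" if "i < 6" "j < 6" "i \<le> j" for i j
    using less_6_cases[OF that(1)] less_6_cases[OF that(2)] that(3)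
    by (elim disjE; simp add: Jmat_entry sform_self sform_outer_inner sform_inner_outer outer inner pairs orth)
  have "sform 3 (r i) (r j) = m * Jmat 3 $$ (i,j)" if ij: "i < 6" "j < 6" for i j
  proof (cases "i \<le> j")
    case False
    have "sform 3 (r i) (r j) = - sform 3 (r j) (r i)" by (rule sform_skew)
    also have "\<dots> = m * (- Jmat 3 $$ (j,i))" using upper[of j i] ij False by simp
    also have "- Jmat 3 $$ (j,i) = (Jmat 3 $$ (i,j) :: 'a)" using Jmat_skew[of j 3 i, where 'a = 'a] ij by simp
    finally show ?thesis .
  qed (use upper ij in blast)
  moreover have "sform 3 (\<lambda>k. mat 6 6 (\<lambda>(i,j). r i j) $$ (i,k)) (\<lambda>k. mat 6 6 (\<lambda>(i,j). r i j) $$ (j,k))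
      = sform 3 (r i) (r j)" if "i < 6" "j < 6" for i j
    using that by (intro sform_cong) auto
  ultimately have "mat 6 6 (\<lambda>(i,j). r i j) \<in> GSp 3"
    using GSp_by_gram_rows[of "mat 6 6 (\<lambda>(i,j). r i j)" 3 m] m by simp
  moreover have "block_diag (mat 6 6 (\<lambda>(i,j). r i j))"
    using outer inner by (intro block_diagI) (simp_all add: in_outer_def in_inner_def)
  ultimately show ?thesis by (simp add: Hgrp_char)
qed

lemma P22_left_factor:
  fixes g Y :: "'a::field mat"
  assumes g: "g \<in> GSp 3" and Y: "Y \<in> GSp 3"
    and r4: "\<And>k. k < 6 \<Longrightarrow> g$$(4,k) = a * Y$$(4,k) + b * Y$$(5,k)"
    and r5: "\<And>k. k < 6 \<Longrightarrow> g$$(5,k) = c * Y$$(4,k) + d * Y$$(5,k)"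
  shows "\<exists>p \<in> P22. g = p * Y"
proof -
  note YI = GSp3_inverse[OF Y]
  define Yi where "Yi = sp_inv 3 Y"
  have gc: "g \<in> carrier_mat 6 6" and Yc: "Y \<in> carrier_mat 6 6" and Yic: "Yi \<in> carrier_mat 6 6"
    using g Y YI(1) by (simp_all add: GSp3_carrier Yi_def)
  define p where "p = g * Yi"
  have pG: "p \<in> GSp 3" using GSp_mult[OF g YI(1)] by (simp add: p_def Yi_def)
  have row: "(X * Yi) $$ (i,k) = (\<Sum>l<6. X$$(i,l) * Yi$$(l,k))" if "X \<in> carrier_mat 6 6" "i < 6" "k < 6" for X i k
    using mult_mat_entry[OF that(1) Yic that(2,3)] .
  have "p $$ (i,k) = 0" if i: "i = 4 \<or> i = 5" and k: "k < 4" for i k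
  proof -
    obtain \<alpha> \<beta> where gi: "\<And>l. l < 6 \<Longrightarrow> g$$(i,l) = \<alpha> * Y$$(4,l) + \<beta> * Y$$(5,l)"
      using i r4 r5 by blast
    have "p $$ (i,k) = (\<Sum>l<6. g$$(i,l) * Yi$$(l,k))" using i k gc by (auto simp: p_def row)
    also have "\<dots> = (\<Sum>l<6. \<alpha> * (Y$$(4,l) * Yi$$(l,k)) + \<beta> * (Y$$(5,l) * Yi$$(l,k)))"
      by (intro sum.cong) (simp_all add: gi algebra_simps)
    also have "\<dots> = \<alpha> * (Y * Yi)$$(4,k) + \<beta> * (Y * Yi)$$(5,k)"
      using k Yc by (simp add: row sum.distrib sum_distrib_left)
    finally show ?thesis using k YI(3) by (simp add: Yi_def)
  qed
  hence "p \<in> P22" using pG by (simp add: P22_char_rows lower_left_2x4_zero_def)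
  moreover have "p * Y = g" unfolding p_def using gc Yic Yc YI(2) by (simp add: Yi_def)
  ultimately show ?thesis by blast
qed

lemma in_double_coset_by_rows:
  fixes g t H :: "'a::field mat"
  assumes g: "g \<in> GSp 3" and t: "t \<in> GSp 3" and H: "H \<in> Hgrp"
    and r4: "\<And>k. k < 6 \<Longrightarrow> g$$(4,k) = a * (t*H)$$(4,k) + b * (t*H)$$(5,k)"
    and r5: "\<And>k. k < 6 \<Longrightarrow> g$$(5,k) = c * (t*H)$$(4,k) + d * (t*H)$$(5,k)"
  shows "g \<in> double_coset t"
proof -
  have HG: "H \<in> GSp 3" using H by (simp add: Hgrp_char)
  obtain p where p: "p \<in> P22" and gp: "g = p * (t * H)"
    using P22_left_factor[OF g GSp_mult[OF t HG] r4 r5] by blast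
  have "g = p * t * H" using gp P22_carrier[OF p] GSp3_carrier[OF t] GSp3_carrier[OF HG] by simp
  thus ?thesis using p H unfolding double_coset_def by blast
qed

lemma bottom_rows_representatives:
  fixes H :: "'a::field mat"
  assumes H: "H \<in> carrier_mat 6 6" and k: "k < 6"
  shows "(1\<^sub>m 6 * H)$$(4,k) = H$$(4,k)" "(1\<^sub>m 6 * H)$$(5,k) = H$$(5,k)"
    "(tau1 * H)$$(4,k) = H$$(4,k)" "(tau1 * H)$$(5,k) = H$$(3,k)"
    "(tau2 * H)$$(4,k) = H$$(4,k)" "(tau2 * H)$$(5,k) = H$$(3,k) + H$$(5,k)"
    "(tau_op * H)$$(4,k) = H$$(0,k) + H$$(4,k)" "(tau_op * H)$$(5,k) = H$$(1,k) + H$$(5,k)"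
  using H k by (simp_all add: mult_mat_6_entry tau_defs)

lemma double_coset_tau_op_if_corner_invertible:
  fixes g :: "'a::field mat"
  assumes g: "g \<in> GSp 3" and D: "g$$(4,0) * g$$(5,5) - g$$(4,5) * g$$(5,0) \<noteq> 0"
  shows "g \<in> double_coset tau_op"
proof -
  define G4 where "G4 = (\<lambda>k. g $$ (4,k))"
  define G5 where "G5 = (\<lambda>k. g $$ (5,k))"
  define \<Delta> where "\<Delta> = g$$(4,0) * g$$(5,5) - g$$(4,5) * g$$(5,0)"
  have "sform 3 G4 G5 = 0" using GSp3_gram(2)[OF g, of 4 5] by (simp add: G4_def G5_def Jmat_entry)
  hence "\<Delta> + sform 3 (inner_part G4) (inner_part G5) = 0"
    using sform_outer_inner_split[of G4 G5] by (simp add: \<Delta>_def G4_def G5_def)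
  hence uw: "sform 3 (inner_part G5) (inner_part G4) = \<Delta>"
    using sform_skew[of 3 "inner_part G5" "inner_part G4"] by (simp add: add_eq_0_iff)
  obtain v1 v2 where v: "in_inner v1" "in_inner v2" "sform 3 v1 v2 = \<Delta>"
    "sform 3 v1 (inner_part G5) = 0" "sform 3 v1 (inner_part G4) = 0"
    "sform 3 v2 (inner_part G5) = 0" "sform 3 v2 (inner_part G4) = 0"
    using inner_symplectic_complement[OF in_inner_inner_part in_inner_inner_part uw D[folded \<Delta>_def]]
    by blast
  define r where "r = (\<lambda>i::nat. if i = 0 then outer_part G4 else if i = 1 then inner_part G5
      else if i = 2 then v1 else if i = 3 then v2 else if i = 4 then inner_part G4 else outer_part G5)"
  have H: "mat 6 6 (\<lambda>(i,j). r i j) \<in> Hgrp"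
  proof (rule mat_of_rows_in_Hgrp[OF D[folded \<Delta>_def]])
    show "sform 3 (r 0) (r 5) = \<Delta>" by (simp add: r_def sform_outer_part \<Delta>_def G4_def G5_def)
    show "sform 3 (r 1) (r 2) = 0" "sform 3 (r 1) (r 3) = 0"
      using v sform_skew[of 3 "inner_part G5" v1] sform_skew[of 3 "inner_part G5" v2] by (simp_all add: r_def)
  qed (use v uw in \<open>simp_all add: r_def\<close>)
  show ?thesis
  proof (rule in_double_coset_by_rows[OF g tau_GSp3(3) H, of 1 0 0 1])
    fix k :: nat assume k: "k < 6"
    show "g$$(4,k) = 1 * (tau_op * mat 6 6 (\<lambda>(i,j). r i j))$$(4,k) + 0 * (tau_op * mat 6 6 (\<lambda>(i,j). r i j))$$(5,k)"
      "g$$(5,k) = 0 * (tau_op * mat 6 6 (\<lambda>(i,j). r i j))$$(4,k) + 1 * (tau_op * mat 6 6 (\<lambda>(i,j). r i j))$$(5,k)"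
      using bottom_rows_representatives(7,8)[of "mat 6 6 (\<lambda>(i,j). r i j)" k] k
      by (simp_all add: r_def outer_part_plus_inner_part G4_def G5_def)
  qed
qed

lemma double_coset_tau1_if_corner_zero:
  fixes g :: "'a::field mat"
  assumes g: "g \<in> GSp 3" and z: "g$$(4,0) = 0" "g$$(4,5) = 0" "g$$(5,0) = 0" "g$$(5,5) = 0"
  shows "g \<in> double_coset tau1"
proof -
  define \<mu> where "\<mu> = sim 3 g"
  have mu: "\<mu> \<noteq> 0" using GSp_sim(1)[OF g] by (simp add: \<mu>_def)
  define G where "G i = (\<lambda>k. g $$ (i,k))" for i
  have M4: "in_inner (G 4)" and M5: "in_inner (G 5)" using z by (simp_all add: in_inner_def G_def)
  have R: "sform 3 (G i) (G j) = \<mu> * Jmat 3 $$ (i,j)" if "i < 6" "j < 6" for i j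
    using GSp3_gram(2)[OF g that] by (simp add: G_def \<mu>_def)
  define t where "t = - sform 3 (inner_part (G 1)) (inner_part (G 0)) / \<mu>"
  define r where "r = (\<lambda>i::nat. if i = 0 then coord 0 1 else if i = 1 then inner_part (G 1)
      else if i = 2 then lin_comb 1 (inner_part (G 0)) t (G 4) else if i = 3 then G 5
      else if i = 4 then G 4 else coord 5 \<mu>)"
  have H: "mat 6 6 (\<lambda>(i,j). r i j) \<in> Hgrp"
  proof (rule mat_of_rows_in_Hgrp[OF mu])
    show "sform 3 (r 0) (r 5) = \<mu>" by (simp add: r_def sform_expand coord_def)
    show "sform 3 (r 1) (r 4) = \<mu>" using R[of 1 4] sform_inner_part_left[OF M4] by (simp add: r_def Jmat_entry)
    show "sform 3 (r 2) (r 3) = \<mu>" using R[of 0 5] R[of 4 5] sform_inner_part_left[OF M5]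
      by (simp add: r_def sform_lin_comb_left Jmat_entry)
    show "sform 3 (r 1) (r 2) = 0" using R[of 1 4] sform_inner_part_left[OF M4, of "G 1"] mu
      by (simp add: r_def sform_lin_comb_right t_def Jmat_entry)
    show "sform 3 (r 1) (r 3) = 0" using R[of 1 5] sform_inner_part_left[OF M5] by (simp add: r_def Jmat_entry)
    show "sform 3 (r 2) (r 4) = 0" using R[of 0 4] R[of 4 4] sform_inner_part_left[OF M4]
      by (simp add: r_def sform_lin_comb_left Jmat_entry)
    show "sform 3 (r 3) (r 4) = 0" using R[of 5 4] by (simp add: r_def Jmat_entry)
    show "in_inner (r 2)" using M4 by (simp add: r_def in_inner_lin_comb)
  qed (use M4 M5 in \<open>simp_all add: r_def in_outer_def coord_def\<close>)
  show ?thesis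
  proof (rule in_double_coset_by_rows[OF g tau_GSp3(1) H, of 1 0 0 1])
    fix k :: nat assume k: "k < 6"
    show "g$$(4,k) = 1 * (tau1 * mat 6 6 (\<lambda>(i,j). r i j))$$(4,k) + 0 * (tau1 * mat 6 6 (\<lambda>(i,j). r i j))$$(5,k)"
      "g$$(5,k) = 0 * (tau1 * mat 6 6 (\<lambda>(i,j). r i j))$$(4,k) + 1 * (tau1 * mat 6 6 (\<lambda>(i,j). r i j))$$(5,k)"
      using bottom_rows_representatives(3,4)[of "mat 6 6 (\<lambda>(i,j). r i j)" k] k
      by (simp_all add: r_def G_def)
  qed
qed

lemma double_coset_tau2_if_independent:
  fixes g :: "'a::field mat" and y z :: "nat \<Rightarrow> 'a"
  assumes g: "g \<in> GSp 3" and y: "in_inner y" and z: "z 0 \<noteq> 0 \<or> z 5 \<noteq> 0" and yz: "sform 3 y z = 0"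
    and ind: "\<And>c d. (\<forall>k. 1 \<le> k \<and> k \<le> 4 \<longrightarrow> c * y k + d * z k = 0) \<Longrightarrow> c = 0 \<and> d = 0"
    and r4: "\<And>k. k < 6 \<Longrightarrow> g$$(4,k) = \<alpha>1 * y k + \<beta>1 * z k"
    and r5: "\<And>k. k < 6 \<Longrightarrow> g$$(5,k) = \<alpha>2 * y k + \<beta>2 * z k"
  shows "g \<in> double_coset tau2"
proof -
  have ind': "c = 0 \<and> d = 0" if "\<forall>k. 1 \<le> k \<and> k \<le> 4 \<longrightarrow> c * y k + d * inner_part z k = 0" for c d
    using that ind[of c d] by (simp add: inner_part_def)
  obtain x1 where x1: "in_inner x1" "sform 3 x1 y = 1" "sform 3 x1 (inner_part z) = 0"
    using exists_inner_dual_pairing[OF ind', where s=1 and t=0] by blast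
  obtain x2 where x2: "in_inner x2" "sform 3 x2 y = 0" "sform 3 x2 (inner_part z) = 1"
    using exists_inner_dual_pairing[OF ind', where s=0 and t=1] by blast
  obtain xo where xo: "in_outer xo" "sform 3 xo (outer_part z) = 1"
    using exists_outer_pairing[OF z] by blast
  have yz': "sform 3 y (inner_part z) = 0" using sform_inner_part_right[OF y] yz by simp
  define r where "r = (\<lambda>i::nat. if i = 0 then xo else if i = 1 then x1
      else if i = 2 then lin_comb 1 x2 (- sform 3 x1 x2) y else if i = 3 then inner_part z
      else if i = 4 then y else outer_part z)"
  have H: "mat 6 6 (\<lambda>(i,j). r i j) \<in> Hgrp"
  proof (rule mat_of_rows_in_Hgrp[where m=1])
    show "sform 3 (r 2) (r 3) = 1" using x2 yz' by (simp add: r_def sform_lin_comb_left)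
    show "sform 3 (r 1) (r 2) = 0" using x1 by (simp add: r_def sform_lin_comb_right)
    show "sform 3 (r 2) (r 4) = 0" using x2 by (simp add: r_def sform_lin_comb_left sform_self)
    show "sform 3 (r 3) (r 4) = 0" using yz' sform_skew[of 3 "inner_part z" y] by (simp add: r_def)
    show "in_inner (r 2)" using x2 y by (simp add: r_def in_inner_lin_comb)
  qed (use xo x1 y in \<open>simp_all add: r_def\<close>)
  show ?thesis
  proof (rule in_double_coset_by_rows[OF g tau_GSp3(2) H, of \<alpha>1 \<beta>1 \<alpha>2 \<beta>2])
    fix k :: nat assume k: "k < 6"
    show "g$$(4,k) = \<alpha>1 * (tau2 * mat 6 6 (\<lambda>(i,j). r i j))$$(4,k) + \<beta>1 * (tau2 * mat 6 6 (\<lambda>(i,j). r i j))$$(5,k)"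
      "g$$(5,k) = \<alpha>2 * (tau2 * mat 6 6 (\<lambda>(i,j). r i j))$$(4,k) + \<beta>2 * (tau2 * mat 6 6 (\<lambda>(i,j). r i j))$$(5,k)"
      using bottom_rows_representatives(5,6)[of "mat 6 6 (\<lambda>(i,j). r i j)" k] k r4[OF k] r5[OF k]
      by (simp_all add: r_def outer_part_plus_inner_part)
  qed
qed

lemma double_coset_one_if_dependent:
  fixes g :: "'a::field mat" and y z :: "nat \<Rightarrow> 'a"
  assumes g: "g \<in> GSp 3" and y: "in_inner y" and p: "1 \<le> p" "p \<le> 4" "y p \<noteq> 0"
    and z: "z 0 \<noteq> 0 \<or> z 5 \<noteq> 0"
    and cd: "\<not> (c = 0 \<and> d = 0)" and dep: "\<forall>k. 1 \<le> k \<and> k \<le> 4 \<longrightarrow> c * y k + d * z k = 0"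
    and r4: "\<And>k. k < 6 \<Longrightarrow> g$$(4,k) = \<alpha>1 * y k + \<beta>1 * z k"
    and r5: "\<And>k. k < 6 \<Longrightarrow> g$$(5,k) = \<alpha>2 * y k + \<beta>2 * z k"
  shows "g \<in> double_coset (1\<^sub>m 6)"
proof -
  have d: "d \<noteq> 0" using cd dep p by auto
  define \<kappa> where "\<kappa> = - c / d"
  define z' where "z' = lin_comb 1 z (- \<kappa>) y"
  have z'_outer: "outer_part z' k = z' k" if "k < 6" for k
  proof (cases "k = 0 \<or> k = 5")
    case False
    hence "c * y k + d * z k = 0" using that dep by auto
    thus ?thesis using False d by (simp add: outer_part_def z'_def lin_comb_def \<kappa>_def field_simps)
  qed (auto simp: outer_part_def)
  have "z' 0 \<noteq> 0 \<or> z' 5 \<noteq> 0" using z y by (simp add: z'_def lin_comb_def in_inner_def)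
  then obtain xo where xo: "in_outer xo" "sform 3 xo (outer_part z') = 1"
    using exists_outer_pairing by blast
  obtain x1 where x1: "in_inner x1" "sform 3 x1 y = 1" using exists_inner_pairing[of p y, OF p] by blast
  obtain v1 v2 where v: "in_inner v1" "in_inner v2" "sform 3 v1 v2 = 1" "sform 3 v1 x1 = 0"
    "sform 3 v1 y = 0" "sform 3 v2 x1 = 0" "sform 3 v2 y = 0"
    using inner_symplectic_complement[OF x1(1) y x1(2)] by auto
  define r where "r = (\<lambda>i::nat. if i = 0 then xo else if i = 1 then x1 else if i = 2 then v1
      else if i = 3 then v2 else if i = 4 then y else outer_part z')"
  have H: "mat 6 6 (\<lambda>(i,j). r i j) \<in> Hgrp"
  proof (rule mat_of_rows_in_Hgrp[where m=1])
    show "sform 3 (r 1) (r 2) = 0" "sform 3 (r 1) (r 3) = 0"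
      using v sform_skew[of 3 x1 v1] sform_skew[of 3 x1 v2] by (simp_all add: r_def)
  qed (use xo x1 y v in \<open>simp_all add: r_def\<close>)
  show ?thesis
  proof (rule in_double_coset_by_rows[OF g one_GSp3 H, of "\<alpha>1 + \<beta>1 * \<kappa>" \<beta>1 "\<alpha>2 + \<beta>2 * \<kappa>" \<beta>2])
    fix k :: nat assume k: "k < 6"
    have rows: "(1\<^sub>m 6 * mat 6 6 (\<lambda>(i,j). r i j))$$(4,k) = y k"
      "(1\<^sub>m 6 * mat 6 6 (\<lambda>(i,j). r i j))$$(5,k) = z k - \<kappa> * y k"
      using bottom_rows_representatives(1,2)[of "mat 6 6 (\<lambda>(i,j). r i j)" k] k z'_outer[OF k]
      by (simp_all add: r_def z'_def lin_comb_def)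
    show "g$$(4,k) = (\<alpha>1 + \<beta>1 * \<kappa>) * (1\<^sub>m 6 * mat 6 6 (\<lambda>(i,j). r i j))$$(4,k) + \<beta>1 * (1\<^sub>m 6 * mat 6 6 (\<lambda>(i,j). r i j))$$(5,k)"
      "g$$(5,k) = (\<alpha>2 + \<beta>2 * \<kappa>) * (1\<^sub>m 6 * mat 6 6 (\<lambda>(i,j). r i j))$$(4,k) + \<beta>2 * (1\<^sub>m 6 * mat 6 6 (\<lambda>(i,j). r i j))$$(5,k)"
      unfolding rows r4[OF k] r5[OF k] by (simp_all add: algebra_simps)
  qed
qed

lemma double_coset_one_or_tau2_by_rows:
  fixes g :: "'a::field mat" and y z :: "nat \<Rightarrow> 'a"
  assumes g: "g \<in> GSp 3" and y: "in_inner y" and p: "1 \<le> p" "p \<le> 4" "y p \<noteq> 0"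
    and z: "z 0 \<noteq> 0 \<or> z 5 \<noteq> 0" and yz: "sform 3 y z = 0"
    and r4: "\<And>k. k < 6 \<Longrightarrow> g$$(4,k) = \<alpha>1 * y k + \<beta>1 * z k"
    and r5: "\<And>k. k < 6 \<Longrightarrow> g$$(5,k) = \<alpha>2 * y k + \<beta>2 * z k"
  shows "g \<in> double_coset (1\<^sub>m 6) \<or> g \<in> double_coset tau2"
proof (cases "\<forall>c d. (\<forall>k. 1 \<le> k \<and> k \<le> 4 \<longrightarrow> c * y k + d * z k = 0) \<longrightarrow> c = 0 \<and> d = 0")
  case True
  have "g \<in> double_coset tau2"
    by (rule double_coset_tau2_if_independent[OF g y z yz _ r4 r5]) (use True in blast)
  thus ?thesis ..
next
  case False
  then obtain c d where cd: "\<not> (c = 0 \<and> d = 0)" "\<forall>k. 1 \<le> k \<and> k \<le> 4 \<longrightarrow> c * y k + d * z k = 0"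
    by blast
  have "g \<in> double_coset (1\<^sub>m 6)" by (rule double_coset_one_if_dependent[OF g y p z cd r4 r5])
  thus ?thesis ..
qed

lemma double_coset_one_or_tau2_if_corner_singular:
  fixes g :: "'a::field mat"
  assumes g: "g \<in> GSp 3" and D: "g$$(4,0) * g$$(5,5) - g$$(4,5) * g$$(5,0) = 0"
    and nz: "\<not> (g$$(4,0) = 0 \<and> g$$(4,5) = 0 \<and> g$$(5,0) = 0 \<and> g$$(5,5) = 0)"
  shows "g \<in> double_coset (1\<^sub>m 6) \<or> g \<in> double_coset tau2"
proof -
  define \<mu> where "\<mu> = sim 3 g"
  have mu: "\<mu> \<noteq> 0" using GSp_sim(1)[OF g] by (simp add: \<mu>_def)
  define G where "G i = (\<lambda>k. g $$ (i,k))" for i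
  have R: "sform 3 (G i) (G j) = \<mu> * Jmat 3 $$ (i,j)" if "i < 6" "j < 6" for i j
    using GSp3_gram(2)[OF g that] by (simp add: G_def \<mu>_def)
  show ?thesis
  proof (cases "g$$(4,0) = 0 \<and> g$$(4,5) = 0")
    case True
    have y: "in_inner (G 4)" using True by (simp add: in_inner_def G_def)
    have "sform 3 (G 1) (G 4) \<noteq> 0" using R[of 1 4] mu by (simp add: Jmat_entry)
    then obtain p where p: "1 \<le> p" "p \<le> 4" "G 4 p \<noteq> 0"
      using inner_support_of_pairing[OF y] by blast
    have z: "G 5 0 \<noteq> 0 \<or> G 5 5 \<noteq> 0" using True nz by (simp add: G_def)
    have yz: "sform 3 (G 4) (G 5) = 0" using R[of 4 5] by (simp add: Jmat_entry)
    show ?thesis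
      by (rule double_coset_one_or_tau2_by_rows[OF g y p z yz, of 1 0 0 1]) (simp_all add: G_def)
  next
    case False
    define s where "s = (if g$$(4,0) \<noteq> 0 then g$$(4,0) else g$$(4,5))"
    define t where "t = (if g$$(4,0) \<noteq> 0 then g$$(5,0) else g$$(5,5))"
    have s: "s \<noteq> 0" using False by (auto simp: s_def)
    define y where "y = lin_comb s (G 5) (- t) (G 4)"
    have "s * g$$(5,0) = t * g$$(4,0)" "s * g$$(5,5) = t * g$$(4,5)"
      using D False by (auto simp: s_def t_def algebra_simps)
    hence y: "in_inner y" by (simp add: in_inner_def y_def lin_comb_def G_def)
    have "sform 3 (G 0) y = s * \<mu>"
      using R[of 0 5] R[of 0 4] by (simp add: y_def sform_lin_comb_right Jmat_entry)
    hence "sform 3 (G 0) y \<noteq> 0" using s mu by simp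
    then obtain p where p: "1 \<le> p" "p \<le> 4" "y p \<noteq> 0"
      using inner_support_of_pairing[OF y] by blast
    have z: "G 4 0 \<noteq> 0 \<or> G 4 5 \<noteq> 0" using False by (auto simp: G_def)
    have yz: "sform 3 y (G 4) = 0"
      using R[of 5 4] R[of 4 4] by (simp add: y_def sform_lin_comb_left Jmat_entry)
    have r5: "g$$(5,k) = 1 / s * y k + t / s * G 4 k" for k
      using s by (simp add: y_def lin_comb_def G_def field_simps)
    show ?thesis
      by (rule double_coset_one_or_tau2_by_rows[OF g y p z yz, of 0 1 "1 / s" "t / s"])
        (simp_all add: G_def r5)
  qed
qed

lemma GSp3_double_coset_cases:
  fixes g :: "'a::field mat"
  assumes g: "g \<in> GSp 3"
  shows "g \<in> double_coset (1\<^sub>m 6) \<or> g \<in> double_coset tau1 \<or> g \<in> double_coset tau2 \<or> g \<in> double_coset tau_op"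
proof (cases "g$$(4,0) * g$$(5,5) - g$$(4,5) * g$$(5,0) = 0")
  case False
  thus ?thesis using double_coset_tau_op_if_corner_invertible[OF g] by blast
next
  case True
  thus ?thesis using double_coset_tau1_if_corner_zero[OF g] double_coset_one_or_tau2_if_corner_singular[OF g]
    by blast
qed

section \<open>The four double cosets are distinct\<close>

(* Rows 4 and 5 of X span the plane <f2,f1> X; these say that it lies in M, meets M, meets O. *)
definition plane_in_inner :: "'a::field mat \<Rightarrow> bool" where
  "plane_in_inner X \<longleftrightarrow> X$$(4,0) = 0 \<and> X$$(4,5) = 0 \<and> X$$(5,0) = 0 \<and> X$$(5,5) = 0"

definition plane_meets_inner :: "'a::field mat \<Rightarrow> bool" where
  "plane_meets_inner X \<longleftrightarrow> (\<exists>a b. (a \<noteq> 0 \<or> b \<noteq> 0) \<and>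
     a * X$$(4,0) + b * X$$(5,0) = 0 \<and> a * X$$(4,5) + b * X$$(5,5) = 0)"

definition plane_meets_outer :: "'a::field mat \<Rightarrow> bool" where
  "plane_meets_outer X \<longleftrightarrow> (\<exists>a b. (a \<noteq> 0 \<or> b \<noteq> 0) \<and>
     (\<forall>k. 1 \<le> k \<and> k \<le> 4 \<longrightarrow> a * X$$(4,k) + b * X$$(5,k) = 0))"

lemma P22_bottom_rows:
  assumes p: "p \<in> P22" and X: "X \<in> carrier_mat 6 6" and i: "i = 4 \<or> i = 5" and k: "k < 6"
  shows "(p * X)$$(i,k) = p$$(i,4) * X$$(4,k) + p$$(i,5) * X$$(5,k)"
  using p i k P22_carrier[OF p] X by (auto simp: P22_char_rows lower_left_2x4_zero_iff mult_mat_6_entry)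

lemma P22_bottom_block_invertible:
  assumes p: "p \<in> P22"
  shows "p$$(4,4) * p$$(5,5) - p$$(4,5) * p$$(5,4) \<noteq> 0"
proof -
  have pG: "p \<in> GSp 3" and z: "lower_left_2x4_zero p" using p by (auto simp: P22_char_rows)
  define m where "m = sim 3 p"
  have m: "m \<noteq> 0" using GSp_sim(1)[OF pG] by (simp add: m_def)
  note R = GSp3_gram(2)[OF pG] and z' = z[unfolded lower_left_2x4_zero_iff]
  have "p$$(0,0)*p$$(5,5) + p$$(0,1)*p$$(5,4) = m" "p$$(0,0)*p$$(4,5) + p$$(0,1)*p$$(4,4) = 0"
    "p$$(1,0)*p$$(5,5) + p$$(1,1)*p$$(5,4) = 0" "p$$(1,0)*p$$(4,5) + p$$(1,1)*p$$(4,4) = m"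
    using R[of 0 5] R[of 0 4] R[of 1 5] R[of 1 4] z' by (simp_all add: sform_expand Jmat_entry m_def)
  hence "p$$(5,5)*p$$(4,4) - p$$(5,4)*p$$(4,5) \<noteq> 0"
    using det_nonzero_of_inverse_2x2(1) m by blast
  thus ?thesis by (simp add: algebra_simps)
qed

lemma bottom_comb_P22_mult:
  assumes p: "p \<in> P22" and X: "X \<in> carrier_mat 6 6" and ab: "a \<noteq> 0 \<or> b \<noteq> 0"
  shows "\<exists>a' b'. (a' \<noteq> 0 \<or> b' \<noteq> 0) \<and>
    (\<forall>k<6. a' * (p * X)$$(4,k) + b' * (p * X)$$(5,k) = a * X$$(4,k) + b * X$$(5,k))"
proof -
  define \<Delta> where "\<Delta> = p$$(4,4) * p$$(5,5) - p$$(4,5) * p$$(5,4)"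
  have \<Delta>: "\<Delta> \<noteq> 0" using P22_bottom_block_invertible[OF p] by (simp add: \<Delta>_def)
  define a' where "a' = (a * p$$(5,5) - b * p$$(5,4)) / \<Delta>"
  define b' where "b' = (b * p$$(4,4) - a * p$$(4,5)) / \<Delta>"
  have "a' * p$$(4,4) + b' * p$$(5,4) = ((a * p$$(5,5) - b * p$$(5,4)) * p$$(4,4) + (b * p$$(4,4) - a * p$$(4,5)) * p$$(5,4)) / \<Delta>"
    "a' * p$$(4,5) + b' * p$$(5,5) = ((a * p$$(5,5) - b * p$$(5,4)) * p$$(4,5) + (b * p$$(4,4) - a * p$$(4,5)) * p$$(5,5)) / \<Delta>"
    unfolding a'_def b'_def using \<Delta> by (simp_all add: field_simps)
  moreover have "(a * p$$(5,5) - b * p$$(5,4)) * p$$(4,4) + (b * p$$(4,4) - a * p$$(4,5)) * p$$(5,4) = a * \<Delta>"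
    "(a * p$$(5,5) - b * p$$(5,4)) * p$$(4,5) + (b * p$$(4,4) - a * p$$(4,5)) * p$$(5,5) = b * \<Delta>"
    by (simp_all add: \<Delta>_def algebra_simps)
  ultimately have c: "a' * p$$(4,4) + b' * p$$(5,4) = a" "a' * p$$(4,5) + b' * p$$(5,5) = b"
    using \<Delta> by simp_all
  hence "a' \<noteq> 0 \<or> b' \<noteq> 0" using ab by auto
  moreover have "a' * (p * X)$$(4,k) + b' * (p * X)$$(5,k) = a * X$$(4,k) + b * X$$(5,k)" if "k < 6" for k
  proof -
    have "a' * (p * X)$$(4,k) + b' * (p * X)$$(5,k)
        = (a' * p$$(4,4) + b' * p$$(5,4)) * X$$(4,k) + (a' * p$$(4,5) + b' * p$$(5,5)) * X$$(5,k)"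
      using P22_bottom_rows[OF p X _ that] by (simp add: algebra_simps)
    thus ?thesis by (simp only: c)
  qed
  ultimately show ?thesis by blast
qed

lemma plane_invariants_P22_mult:
  assumes p: "p \<in> P22" and X: "X \<in> carrier_mat 6 6"
  shows "plane_in_inner X \<Longrightarrow> plane_in_inner (p * X)"
    "plane_meets_inner X \<Longrightarrow> plane_meets_inner (p * X)"
    "plane_meets_outer X \<Longrightarrow> plane_meets_outer (p * X)"
proof -
  show "plane_in_inner X \<Longrightarrow> plane_in_inner (p * X)"
    using P22_bottom_rows[OF p X] by (simp add: plane_in_inner_def)
  show "plane_meets_inner X \<Longrightarrow> plane_meets_inner (p * X)"
  proof -
    assume "plane_meets_inner X"
    then obtain a b where ab: "a \<noteq> 0 \<or> b \<noteq> 0"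
      and z: "a * X$$(4,0) + b * X$$(5,0) = 0" "a * X$$(4,5) + b * X$$(5,5) = 0"
      by (auto simp: plane_meets_inner_def)
    obtain a' b' where nz: "a' \<noteq> 0 \<or> b' \<noteq> 0"
      and E: "\<forall>k<6. a' * (p * X)$$(4,k) + b' * (p * X)$$(5,k) = a * X$$(4,k) + b * X$$(5,k)"
      using bottom_comb_P22_mult[OF p X ab] by blast
    have "a' * (p * X)$$(4,0) + b' * (p * X)$$(5,0) = 0" "a' * (p * X)$$(4,5) + b' * (p * X)$$(5,5) = 0"
      using E z by simp_all
    thus "plane_meets_inner (p * X)" unfolding plane_meets_inner_def using nz by blast
  qed
  show "plane_meets_outer X \<Longrightarrow> plane_meets_outer (p * X)"
  proof -
    assume "plane_meets_outer X"
    then obtain a b where ab: "a \<noteq> 0 \<or> b \<noteq> 0"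
      and z: "\<forall>k. 1 \<le> k \<and> k \<le> 4 \<longrightarrow> a * X$$(4,k) + b * X$$(5,k) = 0"
      by (auto simp: plane_meets_outer_def)
    obtain a' b' where nz: "a' \<noteq> 0 \<or> b' \<noteq> 0"
      and E: "\<forall>k<6. a' * (p * X)$$(4,k) + b' * (p * X)$$(5,k) = a * X$$(4,k) + b * X$$(5,k)"
      using bottom_comb_P22_mult[OF p X ab] by blast
    have "\<forall>k. 1 \<le> k \<and> k \<le> 4 \<longrightarrow> a' * (p * X)$$(4,k) + b' * (p * X)$$(5,k) = 0"
      using E z by simp
    thus "plane_meets_outer (p * X)" unfolding plane_meets_outer_def using nz by blast
  qed
qed

lemma bottom_comb_Hgrp_mult:
  assumes h: "h \<in> Hgrp" and X: "X \<in> carrier_mat 6 6"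
  shows "k = 0 \<or> k = 5 \<Longrightarrow> a * (X * h)$$(4,k) + b * (X * h)$$(5,k)
      = (a * X$$(4,0) + b * X$$(5,0)) * h$$(0,k) + (a * X$$(4,5) + b * X$$(5,5)) * h$$(5,k)"
    "1 \<le> k \<Longrightarrow> k \<le> 4 \<Longrightarrow> a * (X * h)$$(4,k) + b * (X * h)$$(5,k)
      = (\<Sum>l\<in>{1,2,3,4}. (a * X$$(4,l) + b * X$$(5,l)) * h$$(l,k))"
proof -
  have b: "block_diag h" and hc: "h \<in> carrier_mat 6 6" using h Hgrp_carrier by (auto simp: Hgrp_char)
  note z = block_diag_zero[OF b]
  show "k = 0 \<or> k = 5 \<Longrightarrow> a * (X * h)$$(4,k) + b * (X * h)$$(5,k)
      = (a * X$$(4,0) + b * X$$(5,0)) * h$$(0,k) + (a * X$$(4,5) + b * X$$(5,5)) * h$$(5,k)"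
    using X hc by (elim disjE) (simp_all add: mult_mat_6_entry z algebra_simps)
  assume "1 \<le> k" "k \<le> 4"
  hence "k = 1 \<or> k = 2 \<or> k = 3 \<or> k = 4" by auto
  thus "a * (X * h)$$(4,k) + b * (X * h)$$(5,k)
      = (\<Sum>l\<in>{1,2,3,4}. (a * X$$(4,l) + b * X$$(5,l)) * h$$(l,k))"
    using X hc by (elim disjE) (simp_all add: mult_mat_6_entry z algebra_simps)
qed

lemma plane_invariants_Hgrp_mult:
  assumes h: "h \<in> Hgrp" and X: "X \<in> carrier_mat 6 6"
  shows "plane_in_inner X \<Longrightarrow> plane_in_inner (X * h)"
    "plane_meets_inner X \<Longrightarrow> plane_meets_inner (X * h)"
    "plane_meets_outer X \<Longrightarrow> plane_meets_outer (X * h)"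
proof -
  note E = bottom_comb_Hgrp_mult[OF h X]
  show "plane_in_inner X \<Longrightarrow> plane_in_inner (X * h)"
    using E(1)[of 0 1 0] E(1)[of 0 0 1] E(1)[of 5 1 0] E(1)[of 5 0 1] by (simp add: plane_in_inner_def)
  show "plane_meets_inner X \<Longrightarrow> plane_meets_inner (X * h)"
  proof -
    assume "plane_meets_inner X"
    then obtain a b where "a \<noteq> 0 \<or> b \<noteq> 0"
      and "a * X$$(4,0) + b * X$$(5,0) = 0" "a * X$$(4,5) + b * X$$(5,5) = 0"
      by (auto simp: plane_meets_inner_def)
    thus "plane_meets_inner (X * h)"
      unfolding plane_meets_inner_def using E(1)[of 0 a b] E(1)[of 5 a b] by auto
  qed
  show "plane_meets_outer X \<Longrightarrow> plane_meets_outer (X * h)"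
  proof -
    assume "plane_meets_outer X"
    then obtain a b where ab: "a \<noteq> 0 \<or> b \<noteq> 0"
      and z: "\<forall>k. 1 \<le> k \<and> k \<le> 4 \<longrightarrow> a * X$$(4,k) + b * X$$(5,k) = 0"
      by (auto simp: plane_meets_outer_def)
    have "a * (X * h)$$(4,k) + b * (X * h)$$(5,k) = 0" if "1 \<le> k" "k \<le> 4" for k
      using E(2)[OF that, of a b] z by simp
    thus "plane_meets_outer (X * h)" unfolding plane_meets_outer_def using ab by blast
  qed
qed

lemma plane_invariants_double_coset:
  assumes t: "t \<in> carrier_mat 6 6" and t': "t' \<in> double_coset t"
  shows "plane_in_inner t \<Longrightarrow> plane_in_inner t'"
    "plane_meets_inner t \<Longrightarrow> plane_meets_inner t'"
    "plane_meets_outer t \<Longrightarrow> plane_meets_outer t'"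
proof -
  obtain p h where p: "p \<in> P22" and h: "h \<in> Hgrp" and e: "t' = p * t * h"
    using t' by (auto simp: double_coset_def)
  have pt: "p * t \<in> carrier_mat 6 6" using P22_carrier[OF p] t by simp
  note L = plane_invariants_P22_mult[OF p t] and R = plane_invariants_Hgrp_mult[OF h pt]
  show "plane_in_inner t \<Longrightarrow> plane_in_inner t'" "plane_meets_inner t \<Longrightarrow> plane_meets_inner t'"
    "plane_meets_outer t \<Longrightarrow> plane_meets_outer t'"
    using L R e by simp_all
qed

lemma plane_invariants_representatives:
  "\<not> plane_in_inner (1\<^sub>m 6 :: 'a::field mat)" "plane_meets_inner (1\<^sub>m 6 :: 'a::field mat)"
  "plane_meets_outer (1\<^sub>m 6 :: 'a::field mat)"
  "plane_in_inner (tau1 :: 'a::field mat)"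
  "\<not> plane_in_inner (tau2 :: 'a::field mat)" "plane_meets_inner (tau2 :: 'a::field mat)"
  "\<not> plane_meets_outer (tau2 :: 'a::field mat)"
  "\<not> plane_in_inner (tau_op :: 'a::field mat)" "\<not> plane_meets_inner (tau_op :: 'a::field mat)"
proof -
  show "\<not> plane_in_inner (1\<^sub>m 6 :: 'a mat)" "plane_in_inner (tau1 :: 'a mat)"
    "\<not> plane_in_inner (tau2 :: 'a mat)" "\<not> plane_in_inner (tau_op :: 'a mat)"
    "\<not> plane_meets_inner (tau_op :: 'a mat)"
    by (simp_all add: plane_in_inner_def plane_meets_inner_def tau_defs)
  show "plane_meets_inner (1\<^sub>m 6 :: 'a mat)" "plane_meets_inner (tau2 :: 'a mat)"
    unfolding plane_meets_inner_def by (rule exI[of _ 1], rule exI[of _ 0], simp add: tau_defs)+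
  show "plane_meets_outer (1\<^sub>m 6 :: 'a mat)"
    unfolding plane_meets_outer_def by (rule exI[of _ 0], rule exI[of _ 1]) auto
  show "\<not> plane_meets_outer (tau2 :: 'a mat)"
  proof
    assume "plane_meets_outer (tau2 :: 'a mat)"
    then obtain a b :: 'a where ab: "a \<noteq> 0 \<or> b \<noteq> 0"
      and z: "\<forall>k. 1 \<le> k \<and> k \<le> 4 \<longrightarrow> a * tau2$$(4,k) + b * tau2$$(5,k) = 0"
      by (auto simp: plane_meets_outer_def)
    have "a = 0" "b = 0" using z[rule_format, of 4] z[rule_format, of 3] by (simp_all add: tau_defs)
    thus False using ab by simp
  qed
qed

lemma double_coset_neq_if_invariant:
  assumes t: "t \<in> carrier_mat 6 6" and t': "t' \<in> carrier_mat 6 6"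
    and inv: "\<And>s. s \<in> double_coset t \<Longrightarrow> P s" and P: "\<not> P t'"
  shows "double_coset t \<noteq> double_coset t'"
  using self_in_double_coset[OF t'] inv P by blast

lemma double_quotient_eq:
  "(double_quotient :: 'a::field mat set set) =
     {double_coset (1\<^sub>m 6), double_coset tau1, double_coset tau2, double_coset tau_op}"
proof (rule Set.set_eqI, rule iffI)
  fix D :: "'a mat set" assume "D \<in> double_quotient"
  then obtain g where g: "g \<in> GSp 3" and D: "D = double_coset g" by (auto simp: double_quotient_def)
  thus "D \<in> {double_coset (1\<^sub>m 6), double_coset tau1, double_coset tau2, double_coset tau_op}"
    using GSp3_double_coset_cases[OF g] double_coset_eq[of "1\<^sub>m 6 :: 'a mat" g]
      double_coset_eq[of "tau1 :: 'a mat" g] double_coset_eq[of "tau2 :: 'a mat" g]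
      double_coset_eq[of "tau_op :: 'a mat" g] by auto
next
  fix D :: "'a mat set"
  assume "D \<in> {double_coset (1\<^sub>m 6), double_coset tau1, double_coset tau2, double_coset tau_op}"
  thus "D \<in> double_quotient" unfolding double_quotient_def using one_GSp3 tau_GSp3 by auto
qed

lemma card_double_quotient: "card (double_quotient :: 'a::field mat set set) = 4"
proof -
  note V = plane_invariants_representatives[where 'a = 'a]
  have neq: "double_coset t \<noteq> double_coset t'"
    if "t \<in> carrier_mat 6 6" "t' \<in> carrier_mat 6 6" "P t" "\<not> P t'"
      "P = plane_in_inner \<or> P = plane_meets_inner \<or> P = plane_meets_outer" for t t' :: "'a mat" and P
  proof (rule double_coset_neq_if_invariant[of t t' P])
    fix s assume "s \<in> double_coset t"
    thus "P s" using that(3,5) plane_invariants_double_coset[OF that(1)] by auto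
  qed (use that in simp_all)
  have "double_coset (tau1 :: 'a mat) \<noteq> double_coset (1\<^sub>m 6)"
    "double_coset (tau1 :: 'a mat) \<noteq> double_coset tau2" "double_coset (tau1 :: 'a mat) \<noteq> double_coset tau_op"
    by (rule neq[where P = plane_in_inner]; simp add: V)+
  moreover have "double_coset (1\<^sub>m 6 :: 'a mat) \<noteq> double_coset tau2"
    by (rule neq[where P = plane_meets_outer]; simp add: V)
  moreover have "double_coset (1\<^sub>m 6 :: 'a mat) \<noteq> double_coset tau_op"
    "double_coset (tau2 :: 'a mat) \<noteq> double_coset tau_op"
    by (rule neq[where P = plane_meets_inner]; simp add: V)+
  ultimately show ?thesis by (simp add: double_quotient_eq)
qed

theorem lemma6p8:
  assumes "number_field TYPE('a::field_char_0)"
  shows "double_quotient =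
           {double_coset (1\<^sub>m 6 :: 'a mat), double_coset tau1, double_coset tau2, double_coset tau_op}
    \<and> card (double_quotient :: 'a mat set set) = 4
    \<and> plane_of (1\<^sub>m 6 :: 'a mat) = span2 (f 1) (f 2)
    \<and> stab (1\<^sub>m 6 :: 'a mat) = (\<lambda>(h1, h2). iota h1 h2) ` fiber_prod (parabolic 1 1) (parabolic 2 1)
    \<and> plane_of (tau1 :: 'a mat) = span2 (f 2) (f 3)
    \<and> stab (tau1 :: 'a mat) = (\<lambda>(h1, h2). iota h1 h2) ` fiber_prod GL2 (parabolic 2 2)
    \<and> plane_of (tau2 :: 'a mat) = span2 (f 1 + f 3) (f 2)
    \<and> stab (tau2 :: 'a mat) = (\<lambda>(h1, h2). iota h1 h2) ` stab3_set
    \<and> plane_of (tau_op :: 'a mat) = span2 (e 2 + f 1) (e 1 + f 2)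
    \<and> stab (tau_op :: 'a mat) = (\<lambda>(h1, h2). iota h1 (jmap h1 h2)) ` Jgrp"
  using double_quotient_eq card_double_quotient plane_of_representatives
    stab_one stab_tau1 stab_tau2 stab_tau_op
  by blast

end
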